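(* Let $B$ satisfy the standing assumptions below. Let $\xi_0,\xi_0^n\in\mathcal{M}$, $n\in\mathbb{N}$, with $\lim_{n\to\infty}\|\xi_0^n-\xi_0\|=0$, and let $[0,T]$ be a common time interval of existence and uniqueness for the flow equation $\xi_t=\varphi^{t,B(\xi)}_\sharp\xi_0$ with initial conditions $\xi_0$ and $\xi_0^n$; denote by $\xi,\xi^n\in C([0,T];\mathcal{M})$ the corresponding solutions. Then $\xi^n\to\xi$ in $C([0,T];\mathcal{M}_w)$; more precisely there exists a constant $C>0$, depending on the $\|\cdot\|$-norms of $\xi_0,\xi_0^n$ and on $T$, such that $$\sup_{t\in[0,T]}\|\xi_t^n-\xi_t\|\le C\|\xi_0^n-\xi_0\|.$$
   Context: $\mathcal{M}$ is the dual of $C_b(\mathbb{R}^d;\mathbb{R}^d)$ (bounded continuous vector fields, sup norm $\|\cdot\|_\infty$). Weak norm: $\|\xi\|=\sup\{\xi(\theta):\|\theta\|_\infty+\mathrm{Lip}(\theta)\le1\}$; $\mathcal{M}_w$ is $\mathcal{M}$ with metric $d(\xi,\xi')=\|\xi-\xi'\|$. Standing assumptions: $B:\mathcal{M}_w\to C_b^2(\mathbb{R}^d,\mathbb{R}^d)$ is continuous and there is $C_B>0$ with, for all $\xi,\xi'$: $\|B(\xi)\|_{C_b^2}\le C_B(\|\xi\|+1)$, $\|B(\xi)-B(\xi')\|_\infty\le C_B\|\xi-\xi'\|$, $\|DB(\xi)-DB(\xi')\|_\infty\le C_B\|\xi-\xi'\|$ ($D$ the spatial derivative). $\varphi^{t,B(\xi)}$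 is the flow of $\frac{dx_t}{dt}=B(\xi_t)(x_t)$ with $\varphi^{0,B(\xi)}=\mathrm{id}$. Push-forward: $(\varphi_\sharp\theta)(x)=D\varphi(x)^T\theta(\varphi(x))$ and $(\varphi_\sharp\xi)(\theta)=\xi(\varphi_\sharp\theta)$. *)

theory Defs
  imports "HOL-Analysis.Analysis"
begin

text \<open>Bounded continuous vector fields on R^d: the type of bounded continuous functions with the
sup norm.  The space M is its (continuous) dual.\<close>

type_synonym 'd R = "real^'d"
type_synonym 'd field = "'d R \<Rightarrow>\<^sub>C 'd R"
type_synonym 'd meas = "'d field \<Rightarrow>\<^sub>L real"

definition lip :: "'d::finite field \<Rightarrow> real" where
  "lip \<theta> = Inf {L. L-lipschitz_on UNIV (apply_bcontfun \<theta>)}"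

definition wnorm :: "'d::finite meas \<Rightarrow> real" where
  "wnorm \<xi> = (SUP \<theta>\<in>{\<theta>. (\<exists>L. L-lipschitz_on UNIV (apply_bcontfun \<theta>)) \<and> norm \<theta> + lip \<theta> \<le> 1}.
                 blinfun_apply \<xi> \<theta>)"

definition Dsp :: "('d::finite R \<Rightarrow> 'd R) \<Rightarrow> 'd R \<Rightarrow> ('d R \<Rightarrow>\<^sub>L 'd R)" where
  "Dsp f x = Blinfun (frechet_derivative f (at x))"

definition D2sp :: "('d::finite R \<Rightarrow> 'd R) \<Rightarrow> 'd R \<Rightarrow> ('d R \<Rightarrow>\<^sub>L ('d R \<Rightarrow>\<^sub>L 'd R))" where
  "D2sp f x = Blinfun (frechet_derivative (Dsp f) (at x))"

definition Cb2 :: "('d::finite R \<Rightarrow> 'd R) \<Rightarrow> bool" where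
  "Cb2 f \<longleftrightarrow> (\<forall>x. f differentiable at x) \<and> (\<forall>x. Dsp f differentiable at x)
      \<and> continuous_on UNIV (D2sp f)
      \<and> bounded (range f) \<and> bounded (range (Dsp f)) \<and> bounded (range (D2sp f))"

definition cb2norm :: "('d::finite R \<Rightarrow> 'd R) \<Rightarrow> real" where
  "cb2norm f = (SUP x. norm (f x)) + (SUP x. norm (Dsp f x)) + (SUP x. norm (D2sp f x))"

definition supnorm :: "('d::finite R \<Rightarrow> 'd R) \<Rightarrow> real" where
  "supnorm f = (SUP x. norm (f x))"

definition standing_assms :: "('d::finite meas \<Rightarrow> ('d R \<Rightarrow> 'd R)) \<Rightarrow> real \<Rightarrow> bool" where
  "standing_assms B CB \<longleftrightarrow> CB > 0
     \<and> (\<forall>\<xi>. Cb2 (B \<xi>))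
     \<and> (\<forall>\<xi>. \<forall>\<epsilon>>0. \<exists>\<delta>>0. \<forall>\<xi>'. wnorm (\<xi>' - \<xi>) < \<delta> \<longrightarrow>
            cb2norm (\<lambda>x. B \<xi>' x - B \<xi> x) < \<epsilon>)
     \<and> (\<forall>\<xi>. cb2norm (B \<xi>) \<le> CB * (wnorm \<xi> + 1))
     \<and> (\<forall>\<xi> \<xi>'. supnorm (\<lambda>x. B \<xi> x - B \<xi>' x) \<le> CB * wnorm (\<xi> - \<xi>'))
     \<and> (\<forall>\<xi> \<xi>'. (SUP x. norm (Dsp (B \<xi>) x - Dsp (B \<xi>') x)) \<le> CB * wnorm (\<xi> - \<xi>'))"

definition is_flow :: "('d::finite meas \<Rightarrow> ('d R \<Rightarrow> 'd R)) \<Rightarrow> real \<Rightarrow> (real \<Rightarrow> 'd meas)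
     \<Rightarrow> (real \<Rightarrow> 'd R \<Rightarrow> 'd R) \<Rightarrow> bool" where
  "is_flow B T \<xi> \<phi> \<longleftrightarrow> (\<forall>x. \<phi> 0 x = x) \<and>
     (\<forall>x. \<forall>t\<in>{0..T}. ((\<lambda>s. \<phi> s x) has_vector_derivative B (\<xi> t) (\<phi> t x)) (at t within {0..T}))"

definition pf_field :: "('d R \<Rightarrow> 'd R) \<Rightarrow> 'd::finite field \<Rightarrow> 'd R \<Rightarrow> 'd R" where
  "pf_field \<phi> \<theta> x = transpose (matrix (frechet_derivative \<phi> (at x))) *v apply_bcontfun \<theta> (\<phi> x)"

definition pf_meas :: "('d R \<Rightarrow> 'd R) \<Rightarrow> 'd::finite meas \<Rightarrow> 'd meas" where
  "pf_meas \<phi> \<xi> = Blinfun (\<lambda>\<theta>. blinfun_apply \<xi> (Bcontfun (pf_field \<phi> \<theta>)))"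

definition wcont_on :: "real \<Rightarrow> (real \<Rightarrow> 'd::finite meas) \<Rightarrow> bool" where
  "wcont_on T \<xi> \<longleftrightarrow> (\<forall>t\<in>{0..T}. \<forall>\<epsilon>>0. \<exists>\<delta>>0. \<forall>s\<in>{0..T}. \<bar>s - t\<bar> < \<delta> \<longrightarrow> wnorm (\<xi> s - \<xi> t) < \<epsilon>)"

definition is_solution :: "('d::finite meas \<Rightarrow> ('d R \<Rightarrow> 'd R)) \<Rightarrow> real \<Rightarrow> 'd meas
     \<Rightarrow> (real \<Rightarrow> 'd meas) \<Rightarrow> bool" where
  "is_solution B T \<xi>0 \<xi> \<longleftrightarrow> wcont_on T \<xi> \<and> \<xi> 0 = \<xi>0 \<and>
     (\<exists>\<phi>. is_flow B T \<xi> \<phi> \<and> (\<forall>t\<in>{0..T}. \<xi> t = pf_meas (\<phi> t) \<xi>0))"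

definition unique_solution :: "('d::finite meas \<Rightarrow> ('d R \<Rightarrow> 'd R)) \<Rightarrow> real \<Rightarrow> 'd meas
     \<Rightarrow> (real \<Rightarrow> 'd meas) \<Rightarrow> bool" where
  "unique_solution B T \<xi>0 \<xi> \<longleftrightarrow> is_solution B T \<xi>0 \<xi> \<and>
     (\<forall>\<eta>. is_solution B T \<xi>0 \<eta> \<longrightarrow> (\<forall>t\<in>{0..T}. \<eta> t = \<xi> t))"

end

theory Submission
  imports Defs
begin

text \<open>Solutions are push-forwards \<open>\<xi>\<^sub>t = (\<phi>\<^sub>t)\<^sub>\<sharp> \<xi>\<^sub>0\<close> along flows of \<open>C\<^sub>b\<^sup>2\<close> fields. Tested against
  \<open>\<theta>\<close> with \<open>\<parallel>\<theta>\<parallel>\<^sub>\<infinity> + Lip \<theta> \<le> 1\<close>, the difference of two solutions splits into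
  \<open>(\<xi>\<^sub>0\<^sup>n - \<xi>\<^sub>0)((\<phi>\<^sub>t\<^sup>n)\<^sub>\<sharp> \<theta>)\<close>, bounded by the bounded-Lipschitz norm of the pushed test field, and
  \<open>\<xi>\<^sub>0((\<phi>\<^sub>t\<^sup>n)\<^sub>\<sharp> \<theta> - (\<phi>\<^sub>t)\<^sub>\<sharp> \<theta>)\<close>, bounded by the distance of the two flows and of their spatial
  derivatives, which by Gronwall's inequality is at most a multiple of \<open>\<integral>\<^sub>0\<^sup>t \<parallel>\<xi>\<^sub>s\<^sup>n - \<xi>\<^sub>s\<parallel> ds\<close>.
  Gronwall again gives \<open>\<parallel>\<xi>\<^sub>t\<^sup>n - \<xi>\<^sub>t\<parallel> \<le> C \<parallel>\<xi>\<^sub>0\<^sup>n - \<xi>\<^sub>0\<parallel>\<close> as long as both solutions stay in a common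
  ball. For large \<open>n\<close> a continuity argument keeps \<open>\<xi>\<^sup>n\<close> within distance 1 of \<open>\<xi>\<close>, which fixes the
  ball; the finitely many remaining \<open>n\<close> only enlarge \<open>C\<close>.

  The spatial derivative of the flow is obtained without differentiating the ODE: the increments
  \<open>w \<mapsto> \<phi>\<^sub>t (x + w) - \<phi>\<^sub>t x\<close> are linear up to an error quadratic in \<open>w\<close>, and dyadic rescaling
  (as in the Hyers-Ulm stability theorem) turns such a map into a linear one.\<close>

section \<open>The weak norm\<close>

lemma
  fixes \<theta> :: "'d::finite field"
  assumes "L-lipschitz_on UNIV (apply_bcontfun \<theta>)"
  shows lip_nonneg: "0 \<le> lip \<theta>"
    and lip_le: "lip \<theta> \<le> L"
    and lipschitz_on_lip: "(lip \<theta>)-lipschitz_on UNIV (apply_bcontfun \<theta>)"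
proof -
  let ?S = "{L. L-lipschitz_on UNIV (apply_bcontfun \<theta>)}"
  have ne: "?S \<noteq> {}" using assms by auto
  have bdd: "bdd_below ?S" by (rule bdd_belowI[of _ 0]) (auto dest: lipschitz_on_nonneg)
  show nonneg: "0 \<le> lip \<theta>"
    unfolding lip_def by (rule cInf_greatest[OF ne]) (auto dest: lipschitz_on_nonneg)
  show "lip \<theta> \<le> L" unfolding lip_def by (rule cInf_lower[OF _ bdd]) (use assms in auto)
  show "(lip \<theta>)-lipschitz_on UNIV (apply_bcontfun \<theta>)"
  proof (rule lipschitz_onI[OF _ nonneg])
    fix x y :: "'d R"
    show "dist (\<theta> x) (\<theta> y) \<le> lip \<theta> * dist x y"
    proof (cases "x = y")
      case False
      then have pos: "dist x y > 0" by simp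
      have "dist (\<theta> x) (\<theta> y) / dist x y \<le> lip \<theta>"
        unfolding lip_def
      proof (rule cInf_greatest[OF ne])
        fix L' assume "L' \<in> ?S"
        then have "dist (\<theta> x) (\<theta> y) \<le> L' * dist x y" by (auto dest: lipschitz_onD)
        then show "dist (\<theta> x) (\<theta> y) / dist x y \<le> L'" using pos by (simp add: divide_le_eq)
      qed
      then show ?thesis using pos by (simp add: divide_le_eq mult.commute)
    qed simp
  qed
qed

definition BL_unit_ball :: "'d::finite field set" where
  "BL_unit_ball = {\<theta>. (\<exists>L. L-lipschitz_on UNIV (apply_bcontfun \<theta>)) \<and> norm \<theta> + lip \<theta> \<le> 1}"

lemma wnorm_eq_SUP_BL_unit_ball: "wnorm \<xi> = (SUP \<theta>\<in>BL_unit_ball. blinfun_apply \<xi> \<theta>)"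
  unfolding wnorm_def BL_unit_ball_def ..

lemma zero_in_BL_unit_ball: "0 \<in> BL_unit_ball"
proof -
  have "0-lipschitz_on UNIV (apply_bcontfun (0::'d::finite field))"
    by (auto intro: lipschitz_onI)
  then show ?thesis unfolding BL_unit_ball_def using lip_le lip_nonneg by fastforce
qed

lemma bdd_above_BL_unit_ball: "bdd_above (blinfun_apply (\<xi>::'d::finite meas) ` BL_unit_ball)"
proof (rule bdd_aboveI2)
  fix \<theta> :: "'d field" assume "\<theta> \<in> BL_unit_ball"
  then obtain L where "L-lipschitz_on UNIV (apply_bcontfun \<theta>)" "norm \<theta> + lip \<theta> \<le> 1"
    unfolding BL_unit_ball_def by auto
  then have "norm \<theta> \<le> 1" using lip_nonneg by fastforce
  have "blinfun_apply \<xi> \<theta> \<le> norm \<xi> * norm \<theta>" using norm_blinfun[of \<xi> \<theta>] by simp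
  also have "\<dots> \<le> norm \<xi>" using \<open>norm \<theta> \<le> 1\<close> by (simp add: mult_left_le)
  finally show "blinfun_apply \<xi> \<theta> \<le> norm \<xi>" .
qed

lemma wnorm_nonneg: "0 \<le> wnorm \<xi>"
proof -
  have "blinfun_apply \<xi> 0 \<le> wnorm \<xi>"
    unfolding wnorm_eq_SUP_BL_unit_ball by (rule cSUP_upper[OF zero_in_BL_unit_ball bdd_above_BL_unit_ball])
  then show ?thesis by simp
qed

lemma apply_le_wnorm:
  fixes \<theta> :: "'d::finite field"
  assumes L: "L-lipschitz_on UNIV (apply_bcontfun \<theta>)" and N: "norm \<theta> \<le> N"
  shows "blinfun_apply \<xi> \<theta> \<le> wnorm \<xi> * (N + L)"
proof (cases "N + L = 0")
  case True
  then have "norm \<theta> \<le> 0" using N lipschitz_on_nonneg[OF L] by linarith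
  then show ?thesis using True by simp
next
  case False
  define c where "c = N + L"
  have c: "c > 0"
    using False N lipschitz_on_nonneg[OF L] norm_ge_zero[of \<theta>] unfolding c_def by linarith
  have L': "(L / c)-lipschitz_on UNIV (apply_bcontfun ((1/c) *\<^sub>R \<theta>))"
    using lipschitz_on_cmult_nonneg[OF L, of "1/c"] c by simp
  have "norm ((1/c) *\<^sub>R \<theta>) + lip ((1/c) *\<^sub>R \<theta>) \<le> norm \<theta> / c + L / c"
    using lip_le[OF L'] c by simp
  also have "\<dots> \<le> 1" using N c unfolding c_def by (simp add: add_divide_distrib[symmetric])
  finally have "(1/c) *\<^sub>R \<theta> \<in> BL_unit_ball" unfolding BL_unit_ball_def using L' by auto
  then have "blinfun_apply \<xi> ((1/c) *\<^sub>R \<theta>) \<le> wnorm \<xi>"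
    unfolding wnorm_eq_SUP_BL_unit_ball by (rule cSUP_upper[OF _ bdd_above_BL_unit_ball])
  then show ?thesis
    using c unfolding c_def by (simp add: blinfun.scaleR_right divide_le_eq mult.commute)
qed

lemma abs_apply_le_wnorm:
  fixes \<theta> :: "'d::finite field"
  assumes "L-lipschitz_on UNIV (apply_bcontfun \<theta>)" and "norm \<theta> \<le> N"
  shows "\<bar>blinfun_apply \<xi> \<theta>\<bar> \<le> wnorm \<xi> * (N + L)"
  using apply_le_wnorm[OF assms, of \<xi>] apply_le_wnorm[of L "-\<theta>" N \<xi>] assms
  by (simp add: blinfun.minus_right)

lemma wnorm_leI:
  fixes \<xi> :: "'d::finite meas"
  assumes "\<And>\<theta> L. L-lipschitz_on UNIV (apply_bcontfun \<theta>) \<Longrightarrow> norm \<theta> + L \<le> 1 \<Longrightarrow> blinfun_apply \<xi> \<theta> \<le> c"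
  shows "wnorm \<xi> \<le> c"
  unfolding wnorm_eq_SUP_BL_unit_ball
proof (rule cSUP_least)
  show "BL_unit_ball \<noteq> {}" using zero_in_BL_unit_ball by auto
  fix \<theta> :: "'d field" assume "\<theta> \<in> BL_unit_ball"
  then show "blinfun_apply \<xi> \<theta> \<le> c"
    unfolding BL_unit_ball_def using assms lipschitz_on_lip by blast
qed

lemma apply_le_wnorm_unit:
  fixes \<theta> :: "'d::finite field"
  assumes "L-lipschitz_on UNIV (apply_bcontfun \<theta>)" and "norm \<theta> + L \<le> 1"
  shows "\<bar>blinfun_apply \<xi> \<theta>\<bar> \<le> wnorm \<xi>"
  using abs_apply_le_wnorm[OF assms(1) order_refl, of \<xi>] assms(2) wnorm_nonneg[of \<xi>]
  by (meson mult_left_le order_trans)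

lemma wnorm_triangle: "wnorm (a + b) \<le> wnorm a + wnorm (b::'d::finite meas)"
proof (rule wnorm_leI)
  fix \<theta> :: "'d field" and L
  assume "L-lipschitz_on UNIV (apply_bcontfun \<theta>)" "norm \<theta> + L \<le> 1"
  from apply_le_wnorm_unit[OF this, of a] apply_le_wnorm_unit[OF this, of b]
  show "blinfun_apply (a + b) \<theta> \<le> wnorm a + wnorm b" by (simp add: blinfun.add_left)
qed

lemma wnorm_minus: "wnorm (- a) = wnorm (a::'d::finite meas)"
proof -
  have le: "wnorm (- c) \<le> wnorm c" for c :: "'d meas"
  proof (rule wnorm_leI)
    fix \<theta> :: "'d field" and L
    assume "L-lipschitz_on UNIV (apply_bcontfun \<theta>)" "norm \<theta> + L \<le> 1"
    from apply_le_wnorm_unit[OF this, of c]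
    show "blinfun_apply (- c) \<theta> \<le> wnorm c" by (simp add: blinfun.minus_left)
  qed
  show ?thesis using le[of a] le[of "-a"] by simp
qed

lemma wnorm_minus_commute: "wnorm (a - b) = wnorm (b - a::'d::finite meas)"
  using wnorm_minus[of "a - b"] by simp

lemma wnorm_zero: "wnorm (0::'d::finite meas) = 0"
  by (intro antisym wnorm_leI) (simp_all add: wnorm_nonneg)

lemma abs_wnorm_diff_le: "\<bar>wnorm a - wnorm b\<bar> \<le> wnorm (a - b::'d::finite meas)"
  using wnorm_triangle[of "a - b" b] wnorm_triangle[of "b - a" a] wnorm_minus_commute[of a b]
  by simp

section \<open>Fields of class \<open>C\<^sub>b\<^sup>2\<close>\<close>

lemma norm_le_SUP_norm:
  fixes f :: "'a \<Rightarrow> 'b::real_normed_vector"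
  assumes "bounded (range f)"
  shows "norm (f y) \<le> (SUP x. norm (f x))"
proof -
  obtain K where "\<And>x. norm (f x) \<le> K" using assms unfolding bounded_iff by auto
  then have "bdd_above (range (\<lambda>x. norm (f x)))" by (intro bdd_aboveI2)
  then show ?thesis by (rule cSUP_upper[OF UNIV_I])
qed

lemma Cb2_has_derivative: "Cb2 V \<Longrightarrow> (V has_derivative blinfun_apply (Dsp V y)) (at y)"
  unfolding Cb2_def Dsp_def
  by (metis bounded_linear_Blinfun_apply frechet_derivative_works has_derivative_bounded_linear)

lemma Cb2_Dsp_has_derivative: "Cb2 V \<Longrightarrow> (Dsp V has_derivative blinfun_apply (D2sp V y)) (at y)"
  unfolding Cb2_def D2sp_def
  by (metis bounded_linear_Blinfun_apply frechet_derivative_works has_derivative_bounded_linear)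

lemma Cb2_field_diff_increment_le:
  fixes V1 V2 :: "'d::finite R \<Rightarrow> 'd R"
  assumes "Cb2 V1" "Cb2 V2" "\<And>x. norm (Dsp V1 x - Dsp V2 x) \<le> D"
  shows "norm ((V1 (q + a) - V2 (q + a)) - (V1 q - V2 q)) \<le> D * norm a"
proof -
  have "norm ((\<lambda>s. V1 s - V2 s) (q + a) - (\<lambda>s. V1 s - V2 s) q) \<le> D * norm (q + a - q)"
  proof (rule differentiable_bound[where S=UNIV and f'="\<lambda>s. blinfun_apply (Dsp V1 s - Dsp V2 s)"])
    fix x :: "'d R"
    show "((\<lambda>s. V1 s - V2 s) has_derivative blinfun_apply (Dsp V1 x - Dsp V2 x)) (at x within UNIV)"
      using has_derivative_diff[OF Cb2_has_derivative[OF assms(1)] Cb2_has_derivative[OF assms(2)]]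
      by (simp add: minus_blinfun.rep_eq fun_diff_def)
    show "onorm (blinfun_apply (Dsp V1 x - Dsp V2 x)) \<le> D"
      using assms(3)[of x] by (simp add: norm_blinfun.rep_eq)
  qed auto
  then show ?thesis by simp
qed

context
  fixes V :: "'d::finite R \<Rightarrow> 'd R" and M :: real
  assumes Cb2: "Cb2 V" and cb2norm: "cb2norm V \<le> M"
begin

lemma
  shows Cb2_norm_le: "norm (V y) \<le> M"
    and Cb2_norm_Dsp_le: "norm (Dsp V y) \<le> M"
    and Cb2_norm_D2sp_le: "norm (D2sp V y) \<le> M"
proof -
  have "bounded (range V)" "bounded (range (Dsp V))" "bounded (range (D2sp V))"
    using Cb2 unfolding Cb2_def by auto
  note sup = this[THEN norm_le_SUP_norm]
  have "0 \<le> (SUP x. norm (V x))" "0 \<le> (SUP x. norm (Dsp V x))" "0 \<le> (SUP x. norm (D2sp V x))"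
    using sup[of 0] norm_ge_zero by (meson order_trans)+
  with sup[of y] cb2norm show "norm (V y) \<le> M" "norm (Dsp V y) \<le> M" "norm (D2sp V y) \<le> M"
    unfolding cb2norm_def by linarith+
qed

lemma Cb2_bound_nonneg: "0 \<le> M"
  using Cb2_norm_le[of 0] norm_ge_zero order_trans by blast

lemma Cb2_lipschitz: "norm (V a - V b) \<le> M * norm (a - b)"
  by (rule differentiable_bound[where S=UNIV and f'="\<lambda>x. blinfun_apply (Dsp V x)"])
     (auto intro: Cb2_has_derivative[OF Cb2] simp: Cb2_norm_Dsp_le norm_blinfun.rep_eq[symmetric])

lemma Cb2_Dsp_lipschitz: "norm (Dsp V a - Dsp V b) \<le> M * norm (a - b)"
  by (rule differentiable_bound[where S=UNIV and f'="\<lambda>x. blinfun_apply (D2sp V x)"])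
     (auto intro: Cb2_Dsp_has_derivative[OF Cb2] simp: Cb2_norm_D2sp_le norm_blinfun.rep_eq[symmetric])

lemma Cb2_taylor: "norm (V (p + y) - V p - blinfun_apply (Dsp V p) y) \<le> M * norm y ^ 2"
proof -
  have "norm (V (p + y) - V p - blinfun_apply (Dsp V p) (p + y - p)) \<le> norm (p + y - p) * (M * norm y)"
  proof (rule differentiable_bound_linearization[where S="cball p (norm y)" and f'="\<lambda>x. blinfun_apply (Dsp V x)"])
    fix t :: real assume "t \<in> {0..1}"
    then show "p + t *\<^sub>R (p + y - p) \<in> cball p (norm y)"
      by (auto simp: dist_norm mult_left_le_one_le)
  next
    fix x assume "x \<in> cball p (norm y)"
    then have "norm (x - p) \<le> norm y" by (simp add: dist_norm norm_minus_commute)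
    have "onorm (blinfun_apply (Dsp V x) - blinfun_apply (Dsp V p)) = norm (Dsp V x - Dsp V p)"
      by (simp add: norm_blinfun.rep_eq minus_blinfun.rep_eq fun_diff_def)
    also have "\<dots> \<le> M * norm (x - p)" by (rule Cb2_Dsp_lipschitz)
    also have "\<dots> \<le> M * norm y"
      using \<open>norm (x - p) \<le> norm y\<close> Cb2_bound_nonneg by (simp add: mult_left_mono)
    finally show "onorm (blinfun_apply (Dsp V x) - blinfun_apply (Dsp V p)) \<le> M * norm y" .
  next
    fix x show "(V has_derivative blinfun_apply (Dsp V x)) (at x within cball p (norm y))"
      by (rule has_derivative_at_withinI[OF Cb2_has_derivative[OF Cb2]])
  qed simp
  then show ?thesis by (simp add: power2_eq_square mult.commute mult.left_commute)
qed

lemma Cb2_second_difference: "norm (V (q + a) - V q - V (p + a) + V p) \<le> M * norm (q - p) * norm a"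
proof -
  have "norm ((V (q + a) - V q) - (V (p + a) - V p)) \<le> (M * norm a) * norm (q - p)"
  proof (rule differentiable_bound[where S=UNIV and f="\<lambda>s. V (s + a) - V s"
        and f'="\<lambda>s. blinfun_apply (Dsp V (s + a) - Dsp V s)"])
    fix x :: "'d R"
    have "((\<lambda>s. V (s + a)) has_derivative blinfun_apply (Dsp V (x + a))) (at x)"
      using has_derivative_compose[OF has_derivative_add[OF has_derivative_ident has_derivative_const]
          Cb2_has_derivative[OF Cb2, of "x + a"]]
      by (simp add: o_def)
    from has_derivative_diff[OF this Cb2_has_derivative[OF Cb2, of x]]
    show "((\<lambda>s. V (s + a) - V s) has_derivative blinfun_apply (Dsp V (x + a) - Dsp V x)) (at x within UNIV)"
      by (simp add: minus_blinfun.rep_eq fun_diff_def)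
    show "onorm (blinfun_apply (Dsp V (x + a) - Dsp V x)) \<le> M * norm a"
      using Cb2_Dsp_lipschitz[of "x + a" x] by (simp add: norm_blinfun.rep_eq)
  qed auto
  then show ?thesis by (simp add: algebra_simps)
qed

lemma Cb2_increment_combination_le:
  "norm ((V (p + a) - V p) - r1 *\<^sub>R (V (p + b) - V p) - r2 *\<^sub>R (V (p + c) - V p))
     \<le> M * norm (a - r1 *\<^sub>R b - r2 *\<^sub>R c) + M * (norm a ^ 2 + \<bar>r1\<bar> * norm b ^ 2 + \<bar>r2\<bar> * norm c ^ 2)"
proof -
  let ?D = "blinfun_apply (Dsp V p)" and ?R = "\<lambda>y. V (p + y) - V p - blinfun_apply (Dsp V p) y"
  have "(V (p + a) - V p) - r1 *\<^sub>R (V (p + b) - V p) - r2 *\<^sub>R (V (p + c) - V p)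
      = ?D (a - r1 *\<^sub>R b - r2 *\<^sub>R c) + (?R a - r1 *\<^sub>R ?R b - r2 *\<^sub>R ?R c)"
    by (simp add: blinfun.diff_right blinfun.add_right blinfun.scaleR_right algebra_simps)
  also have "norm \<dots> \<le> norm (?D (a - r1 *\<^sub>R b - r2 *\<^sub>R c))
      + (norm (?R a) + \<bar>r1\<bar> * norm (?R b) + \<bar>r2\<bar> * norm (?R c))"
    by (rule order_trans[OF norm_triangle_ineq add_left_mono])
       (rule order_trans[OF norm_triangle_ineq4], rule add_mono[OF order_trans[OF norm_triangle_ineq4]], auto)
  also have "\<dots> \<le> M * norm (a - r1 *\<^sub>R b - r2 *\<^sub>R c)
      + (M * norm a ^ 2 + \<bar>r1\<bar> * (M * norm b ^ 2) + \<bar>r2\<bar> * (M * norm c ^ 2))"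
  proof -
    have "norm (?D y) \<le> M * norm y" for y
      using norm_blinfun[of "Dsp V p" y] Cb2_norm_Dsp_le[of p]
      by (meson mult_right_mono norm_ge_zero order_trans)
    then show ?thesis by (intro add_mono mult_left_mono Cb2_taylor) auto
  qed
  also have "M * norm a ^ 2 + \<bar>r1\<bar> * (M * norm b ^ 2) + \<bar>r2\<bar> * (M * norm c ^ 2)
      = M * (norm a ^ 2 + \<bar>r1\<bar> * norm b ^ 2 + \<bar>r2\<bar> * norm c ^ 2)"
    by (simp only: distrib_left mult.left_commute[of M])
  finally show ?thesis .
qed

end

lemma Cb2_increments_diff_le:
  fixes V1 V2 :: "'d::finite R \<Rightarrow> 'd R"
  assumes "Cb2 V1" "Cb2 V2" "cb2norm V2 \<le> M" "\<And>x. norm (Dsp V1 x - Dsp V2 x) \<le> D"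
  shows "norm ((V1 (q + a) - V1 q) - (V2 (p + b) - V2 p))
    \<le> D * norm a + M * norm (q - p) * norm a + M * norm (a - b)"
proof -
  have "(V1 (q + a) - V1 q) - (V2 (p + b) - V2 p)
      = ((V1 (q + a) - V2 (q + a)) - (V1 q - V2 q)) + (V2 (q + a) - V2 q - V2 (p + a) + V2 p)
        + (V2 (p + a) - V2 (p + b))"
    by (simp add: algebra_simps)
  then have "norm ((V1 (q + a) - V1 q) - (V2 (p + b) - V2 p)) \<le> norm ((V1 (q + a) - V2 (q + a)) - (V1 q - V2 q))
      + norm (V2 (q + a) - V2 q - V2 (p + a) + V2 p) + norm (V2 (p + a) - V2 (p + b))"
    by (metis order_trans[OF norm_triangle_ineq add_right_mono[OF norm_triangle_ineq]])
  also have "\<dots> \<le> D * norm a + M * norm (q - p) * norm a + M * norm (a - b)"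
  proof (intro add_mono)
    show "norm ((V1 (q + a) - V2 (q + a)) - (V1 q - V2 q)) \<le> D * norm a"
      by (rule Cb2_field_diff_increment_le[OF assms(1,2,4)])
    show "norm (V2 (q + a) - V2 q - V2 (p + a) + V2 p) \<le> M * norm (q - p) * norm a"
      by (rule Cb2_second_difference[OF assms(2,3)])
    show "norm (V2 (p + a) - V2 (p + b)) \<le> M * norm (a - b)"
      using Cb2_lipschitz[OF assms(2,3), of "p + a" "p + b"] by simp
  qed
  finally show ?thesis .
qed

lemma standing_assmsD:
  assumes "standing_assms B CB"
  shows standing_assms_pos: "CB > 0"
    and standing_assms_Cb2: "Cb2 (B \<xi>)"
    and standing_assms_cb2norm_le: "cb2norm (B \<xi>) \<le> CB * (wnorm \<xi> + 1)"
  using assms unfolding standing_assms_def by auto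

lemma standing_assms_norm_diff_le:
  assumes "standing_assms B CB"
  shows "norm (B \<xi> y - B \<xi>' y) \<le> CB * wnorm (\<xi> - \<xi>')"
proof -
  have "bounded (range (\<lambda>x. B \<xi> x - B \<xi>' x))"
    using standing_assms_Cb2[OF assms] unfolding Cb2_def by (auto intro: bounded_minus_comp)
  then have "norm (B \<xi> y - B \<xi>' y) \<le> supnorm (\<lambda>x. B \<xi> x - B \<xi>' x)"
    unfolding supnorm_def by (rule norm_le_SUP_norm)
  also have "\<dots> \<le> CB * wnorm (\<xi> - \<xi>')" using assms unfolding standing_assms_def by auto
  finally show ?thesis .
qed

lemma standing_assms_norm_Dsp_diff_le:
  assumes "standing_assms B CB"
  shows "norm (Dsp (B \<xi>) y - Dsp (B \<xi>') y) \<le> CB * wnorm (\<xi> - \<xi>')"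
proof -
  have "bounded (range (\<lambda>x. Dsp (B \<xi>) x - Dsp (B \<xi>') x))"
    using standing_assms_Cb2[OF assms] unfolding Cb2_def by (auto intro: bounded_minus_comp)
  then have "norm (Dsp (B \<xi>) y - Dsp (B \<xi>') y) \<le> (SUP x. norm (Dsp (B \<xi>) x - Dsp (B \<xi>') x))"
    by (rule norm_le_SUP_norm)
  also have "\<dots> \<le> CB * wnorm (\<xi> - \<xi>')" using assms unfolding standing_assms_def by auto
  finally show ?thesis .
qed

section \<open>Gronwall's inequality\<close>

lemma gronwall_integral:
  fixes u :: "real \<Rightarrow> real"
  assumes cont: "continuous_on {0..t1} u" and b: "b \<ge> 0"
    and le: "\<And>t. t \<in> {0..t1} \<Longrightarrow> u t \<le> a + b * integral {0..t} u"
    and t: "t \<in> {0..t1}"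
  shows "u t \<le> a * exp (b * t)"
proof (cases "b = 0")
  case True then show ?thesis using le[OF t] by simp
next
  case False
  then have bp: "b > 0" using b by simp
  define F where "F s = integral {0..s} u" for s
  have F_deriv: "(F has_real_derivative u s) (at s within {0..t1})" if "s \<in> {0..t1}" for s
    unfolding F_def by (rule integral_has_real_derivative[OF cont that])
  have F_cont: "continuous_on {0..t1} F"
    unfolding F_def by (rule indefinite_integral_continuous_1[OF integrable_continuous_real[OF cont]])
  define H where "H r = exp (- (b*r)) * (F r + a/b)" for r
  \<comment> \<open>\<open>H' = e\<^sup>-\<^sup>b\<^sup>r (u - b F - a) \<le> 0\<close> by hypothesis\<close>
  have "H t \<le> H 0"
  proof (rule DERIV_nonpos_imp_decreasing_open[of 0 t H])
    show "0 \<le> t" using t by simp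
    show "continuous_on {0..t} H" unfolding H_def
      by (intro continuous_intros continuous_on_subset[OF F_cont]) (use t in auto)
    fix x assume x: "0 < x" "x < t"
    then have x1: "x \<in> {0..t1}" using t by auto
    have "at x within {0..t1} = at x" by (rule at_within_Icc_at) (use x t in auto)
    then have "(F has_real_derivative u x) (at x)" using F_deriv[OF x1] by simp
    then have "(H has_real_derivative (exp (- (b*x)) * (-b)) * (F x + a/b) + exp (- (b*x)) * u x) (at x)"
      unfolding H_def by (auto intro!: derivative_eq_intros)
    moreover have "(exp (- (b*x)) * (-b)) * (F x + a/b) + exp (- (b*x)) * u x
        = exp (- (b*x)) * (u x - b * F x - a)"
      using bp by (simp add: field_simps)
    moreover have "exp (- (b*x)) * (u x - b * F x - a) \<le> 0"
      using le[OF x1] unfolding F_def by (simp add: mult_nonneg_nonpos)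
    ultimately show "\<exists>y. (H has_real_derivative y) (at x) \<and> y \<le> 0" by auto
  qed
  then have "F t + a/b \<le> exp (b*t) * (a / b)"
    unfolding H_def F_def by (simp add: exp_minus field_simps)
  then have "b * (F t + a/b) \<le> b * (exp (b*t) * (a / b))"
    using bp by (intro mult_left_mono) auto
  then have "b * F t \<le> a * exp (b*t) - a"
    using bp by (simp add: distrib_left mult.commute)
  then show ?thesis using le[OF t] unfolding F_def by simp
qed

lemma gronwall_ode:
  fixes f :: "real \<Rightarrow> 'a::euclidean_space"
  assumes t1: "0 \<le> t1"
    and deriv: "\<And>s. s \<in> {0..t1} \<Longrightarrow> (f has_vector_derivative f' s) (at s within {0..t1})"
    and bound: "\<And>s. s \<in> {0..t1} \<Longrightarrow> norm (f' s) \<le> L * norm (f s) + g s"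
    and g_cont: "continuous_on {0..t1} g" and g_nonneg: "\<And>s. s \<in> {0..t1} \<Longrightarrow> 0 \<le> g s"
    and L: "0 \<le> L"
  shows "norm (f t1) \<le> (norm (f 0) + integral {0..t1} g) * exp (L * t1)"
proof -
  have nf_cont: "continuous_on {0..t1} (\<lambda>s. norm (f s))"
    by (intro continuous_intros continuous_on_vector_derivative[OF deriv])
  have "norm (f s) \<le> (norm (f 0) + integral {0..t1} g) + L * integral {0..s} (\<lambda>s. norm (f s))"
    if s: "s \<in> {0..t1}" for s
  proof -
    have sub: "{0..s} \<subseteq> {0..t1}" using s by auto
    have nfi: "(\<lambda>s. norm (f s)) integrable_on {0..s}"
      by (rule integrable_continuous_real[OF continuous_on_subset[OF nf_cont sub]])
    have gi: "g integrable_on {0..s}" "g integrable_on {0..t1}"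
      by (auto intro: integrable_continuous_real continuous_on_subset[OF g_cont sub] g_cont)
    have "(f' has_integral (f s - f 0)) {0..s}"
      by (rule fundamental_theorem_of_calculus)
         (use s in \<open>auto intro: has_vector_derivative_within_subset[OF deriv]\<close>)
    then have fi: "f' integrable_on {0..s}" and fe: "integral {0..s} f' = f s - f 0"
      by (auto simp: has_integral_integrable_integral)
    have "norm (f s - f 0) \<le> integral {0..s} (\<lambda>r. L * norm (f r) + g r)"
      unfolding fe[symmetric]
      by (rule integral_norm_bound_integral[OF fi])
        (use nfi gi sub in \<open>auto intro!: integrable_add integrable_on_mult_right bound\<close>)
    also have "\<dots> = L * integral {0..s} (\<lambda>r. norm (f r)) + integral {0..s} g"
      using nfi gi by (simp add: integral_add integrable_on_mult_right)
    also have "integral {0..s} g \<le> integral {0..t1} g"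
      using sub gi g_nonneg by (intro integral_subset_le) auto
    finally show ?thesis using norm_triangle_sub[of "f s" "f 0"] by simp
  qed
  from gronwall_integral[OF nf_cont L this] t1 show ?thesis by simp
qed

section \<open>Approximately linear maps\<close>

definition almost_linear :: "('a::real_normed_vector \<Rightarrow> 'b::real_normed_vector) \<Rightarrow> real \<Rightarrow> bool" where
  "almost_linear \<Delta> K \<longleftrightarrow> (\<forall>r1 r2 w1 w2.
     norm (\<Delta> (r1 *\<^sub>R w1 + r2 *\<^sub>R w2) - r1 *\<^sub>R \<Delta> w1 - r2 *\<^sub>R \<Delta> w2)
       \<le> K * (norm (r1 *\<^sub>R w1 + r2 *\<^sub>R w2) ^ 2 + \<bar>r1\<bar> * norm w1 ^ 2 + \<bar>r2\<bar> * norm w2 ^ 2))"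

definition dyadic_rescale :: "('a::real_vector \<Rightarrow> 'b::real_vector) \<Rightarrow> nat \<Rightarrow> 'a \<Rightarrow> 'b" where
  "dyadic_rescale \<Delta> k v = (2::real) ^ k *\<^sub>R \<Delta> ((1 / 2 ^ k) *\<^sub>R v)"

lemma dyadic_rescale_0 [simp]: "dyadic_rescale \<Delta> 0 = \<Delta>"
  by (simp add: dyadic_rescale_def fun_eq_iff)

lemma dyadic_rescale_Suc: "dyadic_rescale \<Delta> (Suc k) v = 2 *\<^sub>R dyadic_rescale \<Delta> k ((1/2) *\<^sub>R v)"
  by (simp add: dyadic_rescale_def mult.commute)

lemma almost_linear_dyadic_rescale:
  assumes "almost_linear \<Delta> K"
  shows "almost_linear (dyadic_rescale \<Delta> k) (K * (1/2) ^ k)"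
  unfolding almost_linear_def
proof (intro allI)
  fix r1 r2 :: real and u v
  define c :: real where "c = 1 / 2 ^ k"
  have c: "c > 0" unfolding c_def by simp
  have "dyadic_rescale \<Delta> k (r1 *\<^sub>R u + r2 *\<^sub>R v) - r1 *\<^sub>R dyadic_rescale \<Delta> k u - r2 *\<^sub>R dyadic_rescale \<Delta> k v
      = (2 ^ k) *\<^sub>R (\<Delta> (r1 *\<^sub>R (c *\<^sub>R u) + r2 *\<^sub>R (c *\<^sub>R v)) - r1 *\<^sub>R \<Delta> (c *\<^sub>R u) - r2 *\<^sub>R \<Delta> (c *\<^sub>R v))"
    unfolding dyadic_rescale_def c_def by (simp add: algebra_simps)
  then have "norm (dyadic_rescale \<Delta> k (r1 *\<^sub>R u + r2 *\<^sub>R v) - r1 *\<^sub>R dyadic_rescale \<Delta> k u - r2 *\<^sub>R dyadic_rescale \<Delta> k v)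
      = 2 ^ k * norm (\<Delta> (r1 *\<^sub>R (c *\<^sub>R u) + r2 *\<^sub>R (c *\<^sub>R v)) - r1 *\<^sub>R \<Delta> (c *\<^sub>R u) - r2 *\<^sub>R \<Delta> (c *\<^sub>R v))"
    by simp
  also have "\<dots> \<le> 2 ^ k * (K * (norm (r1 *\<^sub>R (c *\<^sub>R u) + r2 *\<^sub>R (c *\<^sub>R v)) ^ 2
      + \<bar>r1\<bar> * norm (c *\<^sub>R u) ^ 2 + \<bar>r2\<bar> * norm (c *\<^sub>R v) ^ 2))"
    using assms unfolding almost_linear_def by (intro mult_left_mono) (blast, simp)
  also have "r1 *\<^sub>R (c *\<^sub>R u) + r2 *\<^sub>R (c *\<^sub>R v) = c *\<^sub>R (r1 *\<^sub>R u + r2 *\<^sub>R v)"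
    by (simp add: algebra_simps)
  also have "2 ^ k * (K * (norm (c *\<^sub>R (r1 *\<^sub>R u + r2 *\<^sub>R v)) ^ 2 + \<bar>r1\<bar> * norm (c *\<^sub>R u) ^ 2
      + \<bar>r2\<bar> * norm (c *\<^sub>R v) ^ 2))
    = K * (1/2) ^ k * (norm (r1 *\<^sub>R u + r2 *\<^sub>R v) ^ 2 + \<bar>r1\<bar> * norm u ^ 2 + \<bar>r2\<bar> * norm v ^ 2)"
    using c unfolding norm_scaleR abs_of_pos[OF c] unfolding c_def
    by (simp add: field_simps power2_eq_square power_mult_distrib)
  finally show "norm (dyadic_rescale \<Delta> k (r1 *\<^sub>R u + r2 *\<^sub>R v) - r1 *\<^sub>R dyadic_rescale \<Delta> k u
      - r2 *\<^sub>R dyadic_rescale \<Delta> k v)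
    \<le> K * (1/2) ^ k * (norm (r1 *\<^sub>R u + r2 *\<^sub>R v) ^ 2 + \<bar>r1\<bar> * norm u ^ 2 + \<bar>r2\<bar> * norm v ^ 2)" .
qed

lemma dyadic_rescale_step_le:
  assumes "almost_linear \<Delta> K"
  shows "norm (dyadic_rescale \<Delta> (Suc k) v - dyadic_rescale \<Delta> k v) \<le> (3/2 * K * norm v ^ 2) * (1/2) ^ k"
proof -
  let ?a = "dyadic_rescale \<Delta> k" and ?w = "(1/2::real) *\<^sub>R v"
  \<comment> \<open>the step is the linearity defect of \<open>?a\<close> at \<open>v = ?w + ?w\<close>\<close>
  have step: "dyadic_rescale \<Delta> (Suc k) v - ?a v = - (?a (1 *\<^sub>R ?w + 1 *\<^sub>R ?w) - 1 *\<^sub>R ?a ?w - 1 *\<^sub>R ?a ?w)"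
    unfolding dyadic_rescale_Suc by (simp add: scaleR_2 flip: scaleR_add_left)
  have "norm (?a (1 *\<^sub>R ?w + 1 *\<^sub>R ?w) - 1 *\<^sub>R ?a ?w - 1 *\<^sub>R ?a ?w)
      \<le> K * (1/2) ^ k * (norm (1 *\<^sub>R ?w + 1 *\<^sub>R ?w) ^ 2 + \<bar>1\<bar> * norm ?w ^ 2 + \<bar>1\<bar> * norm ?w ^ 2)"
    using almost_linear_dyadic_rescale[OF assms, of k] unfolding almost_linear_def by blast
  then have "norm (dyadic_rescale \<Delta> (Suc k) v - ?a v)
      \<le> K * (1/2) ^ k * (norm (1 *\<^sub>R ?w + 1 *\<^sub>R ?w) ^ 2 + \<bar>1\<bar> * norm ?w ^ 2 + \<bar>1\<bar> * norm ?w ^ 2)"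
    unfolding step norm_minus_cancel .
  also have "\<dots> = (3/2 * K * norm v ^ 2) * (1/2) ^ k"
    by (simp add: power2_eq_square field_simps flip: scaleR_add_left)
  finally show ?thesis .
qed

lemma linear_of_almost_linear_limit:
  fixes a :: "nat \<Rightarrow> 'a::real_normed_vector \<Rightarrow> 'b::real_normed_vector"
  assumes almost: "\<And>k. almost_linear (a k) (e k)" and e: "e \<longlonglongrightarrow> 0"
    and lim: "\<And>v. (\<lambda>k. a k v) \<longlonglongrightarrow> A v"
  shows "linear A"
proof -
  have combination: "A (r1 *\<^sub>R u + r2 *\<^sub>R v) = r1 *\<^sub>R A u + r2 *\<^sub>R A v" for r1 r2 u v
  proof -
    let ?Q = "norm (r1 *\<^sub>R u + r2 *\<^sub>R v) ^ 2 + \<bar>r1\<bar> * norm u ^ 2 + \<bar>r2\<bar> * norm v ^ 2"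
    have "(\<lambda>k. a k (r1 *\<^sub>R u + r2 *\<^sub>R v) - r1 *\<^sub>R a k u - r2 *\<^sub>R a k v)
        \<longlonglongrightarrow> A (r1 *\<^sub>R u + r2 *\<^sub>R v) - r1 *\<^sub>R A u - r2 *\<^sub>R A v"
      by (intro tendsto_diff tendsto_scaleR tendsto_const lim)
    moreover have "(\<lambda>k. a k (r1 *\<^sub>R u + r2 *\<^sub>R v) - r1 *\<^sub>R a k u - r2 *\<^sub>R a k v) \<longlonglongrightarrow> 0"
    proof (rule Lim_null_comparison)
      show "\<forall>\<^sub>F k in sequentially. norm (a k (r1 *\<^sub>R u + r2 *\<^sub>R v) - r1 *\<^sub>R a k u - r2 *\<^sub>R a k v)
          \<le> e k * ?Q"
        using almost unfolding almost_linear_def by simp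
      show "(\<lambda>k. e k * ?Q) \<longlonglongrightarrow> 0" using e by (rule tendsto_mult_left_zero)
    qed
    ultimately have "A (r1 *\<^sub>R u + r2 *\<^sub>R v) - r1 *\<^sub>R A u - r2 *\<^sub>R A v = 0"
      by (rule LIMSEQ_unique)
    then show ?thesis by (simp add: algebra_simps)
  qed
  show "linear A"
  proof (rule linearI)
    show "A (x + y) = A x + A y" for x y using combination[of 1 x 1 y] by simp
    show "A (c *\<^sub>R x) = c *\<^sub>R A x" for c x using combination[of c x 0 0] by simp
  qed
qed

lemma almost_linear_imp_near_linear:
  fixes \<Delta> :: "'a::real_normed_vector \<Rightarrow> 'b::banach"
  assumes "K \<ge> 0" and "almost_linear \<Delta> K"
  shows "\<exists>A. linear A \<and> (\<forall>v. norm (\<Delta> v - A v) \<le> 3 * K * norm v ^ 2)"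
proof -
  let ?a = "dyadic_rescale \<Delta>"
  define d where "d v k = ?a (Suc k) v - ?a k v" for v k
  have step: "norm (d v k) \<le> (3/2 * K * norm v ^ 2) * (1/2) ^ k" for v k
    unfolding d_def by (rule dyadic_rescale_step_le[OF assms(2)])
  have geom: "summable (\<lambda>k. (3/2 * K * norm v ^ 2) * (1/2::real) ^ k)" for v :: 'a
    by (intro summable_mult summable_geometric) simp
  have summable: "summable (d v)" for v
    by (rule summable_comparison_test'[where N=0, OF geom]) (rule step)
  have abs_summable: "summable (\<lambda>k. norm (d v k))" for v
    by (rule summable_comparison_test'[where N=0, OF geom]) (use step in simp)
  define A where "A v = \<Delta> v + suminf (d v)" for v
  have lim: "(\<lambda>k. ?a k v) \<longlonglongrightarrow> A v" for v
  proof -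
    have "?a k v = \<Delta> v + (\<Sum>j<k. d v j)" for k
      unfolding d_def using sum_lessThan_telescope[of "\<lambda>j. ?a j v" k] by simp
    then show ?thesis unfolding A_def by (simp add: tendsto_add summable_LIMSEQ[OF summable])
  qed
  have near: "norm (\<Delta> v - A v) \<le> 3 * K * norm v ^ 2" for v
  proof -
    have "norm (\<Delta> v - A v) \<le> (\<Sum>k. norm (d v k))"
      unfolding A_def using summable_norm[OF abs_summable] by (simp add: norm_minus_commute)
    also have "\<dots> \<le> (\<Sum>k. (3/2 * K * norm v ^ 2) * (1/2) ^ k)"
      by (rule suminf_le[OF step abs_summable geom])
    also have "\<dots> = (3/2 * K * norm v ^ 2) * (\<Sum>k. (1/2::real) ^ k)"
      by (rule suminf_mult) (rule summable_geometric, simp)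
    also have "\<dots> = 3 * K * norm v ^ 2"
      using suminf_geometric[of "1/2::real"] by simp
    finally show ?thesis .
  qed
  have "(\<lambda>k. K * (1/2::real) ^ k) \<longlonglongrightarrow> 0"
    by (intro tendsto_mult_right_zero LIMSEQ_power_zero) simp
  then have "linear A"
    by (rule linear_of_almost_linear_limit[OF almost_linear_dyadic_rescale[OF assms(2)] _ lim])
  with near show ?thesis by blast
qed

lemma le_of_le_add_mult:
  fixes x y z :: real
  assumes "\<And>h. h > 0 \<Longrightarrow> x \<le> y + h * z" and "z \<ge> 0"
  shows "x \<le> y"
proof (rule field_le_epsilon)
  fix e :: real assume "e > 0"
  then have "x \<le> y + (e / (z + 1)) * z" using assms(2) by (intro assms(1)) simp
  also have "(e / (z + 1)) * z \<le> e" using \<open>e > 0\<close> assms(2) by (simp add: field_simps)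
  finally show "x \<le> y + e" by simp
qed

lemma linear_approximants_diff_le:
  fixes A A' :: "'a::real_normed_vector \<Rightarrow> 'b::real_normed_vector"
  assumes "linear A" "linear A'"
    and "\<And>w. norm (\<Delta> w - A w) \<le> K * norm w ^ 2" "\<And>w. norm (\<Delta>' w - A' w) \<le> K * norm w ^ 2"
    and "\<And>w. norm (\<Delta> w - \<Delta>' w) \<le> c * norm w" and "K \<ge> 0"
  shows "norm (A v - A' v) \<le> c * norm v"
proof (rule le_of_le_add_mult)
  show "0 \<le> 2 * K * norm v ^ 2" using \<open>K \<ge> 0\<close> by simp
  fix h :: real assume h: "h > 0"
  let ?w = "h *\<^sub>R v"
  have "h * norm (A v - A' v) = norm (A ?w - A' ?w)"
    using h linear_scale[OF assms(1)] linear_scale[OF assms(2)]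
    by (simp flip: scaleR_diff_right)
  also have "A ?w - A' ?w = (\<Delta>' ?w - A' ?w) - (\<Delta> ?w - A ?w) + (\<Delta> ?w - \<Delta>' ?w)"
    by (simp add: algebra_simps)
  also have "norm \<dots> \<le> norm (\<Delta>' ?w - A' ?w) + norm (\<Delta> ?w - A ?w) + norm (\<Delta> ?w - \<Delta>' ?w)"
    by (meson add_mono norm_triangle_ineq norm_triangle_ineq4 order_trans order_refl)
  also have "\<dots> \<le> K * norm ?w ^ 2 + K * norm ?w ^ 2 + c * norm ?w"
    by (intro add_mono assms(3) assms(4) assms(5))
  also have "\<dots> = h * (c * norm v + h * (2 * K * norm v ^ 2))"
    using h by (simp add: power2_eq_square algebra_simps)
  finally show "norm (A v - A' v) \<le> c * norm v + h * (2 * K * norm v ^ 2)" using h by simp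
qed

lemma has_derivative_of_quadratic_remainder:
  fixes f :: "'a::euclidean_space \<Rightarrow> 'b::real_normed_vector"
  assumes "linear A" "\<And>v. norm (f (x + v) - f x - A v) \<le> K * norm v ^ 2"
  shows "(f has_derivative A) (at x)"
  unfolding has_derivative_at_alt
proof (intro conjI allI impI)
  show "bounded_linear A" using assms(1) by (simp add: linear_conv_bounded_linear)
  fix e :: real assume e: "e > 0"
  define d where "d = e / (\<bar>K\<bar> + 1)"
  have d: "d > 0" unfolding d_def using e by simp
  show "\<exists>d>0. \<forall>y. norm (y - x) < d \<longrightarrow> norm (f y - f x - A (y - x)) \<le> e * norm (y - x)"
  proof (intro exI[of _ d] conjI d allI impI)
    fix y assume y: "norm (y - x) < d"
    have "norm (f y - f x - A (y - x)) \<le> K * norm (y - x) ^ 2" using assms(2)[of "y - x"] by simp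
    also have "\<dots> \<le> (\<bar>K\<bar> + 1) * norm (y - x) * norm (y - x)"
      using mult_right_mono[of K "\<bar>K\<bar> + 1" "norm (y - x) * norm (y - x)"]
      by (simp add: power2_eq_square mult.assoc)
    also have "\<dots> \<le> (\<bar>K\<bar> + 1) * d * norm (y - x)"
      using y by (intro mult_right_mono mult_left_mono) auto
    also have "(\<bar>K\<bar> + 1) * d = e" unfolding d_def by simp
    finally show "norm (f y - f x - A (y - x)) \<le> e * norm (y - x)" .
  qed
qed

section \<open>Flows of \<open>C\<^sub>b\<^sup>2\<close> fields\<close>

text \<open>All constants depend on the horizon \<open>T0\<close> and not on the time \<open>t1 \<le> T0\<close> up to which the flow
  is considered; the continuation argument at the end relies on this.\<close>

locale Cb2_flow =
  fixes V :: "real \<Rightarrow> 'd::finite R \<Rightarrow> 'd R" and \<phi> :: "real \<Rightarrow> 'd R \<Rightarrow> 'd R"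
    and t1 T0 M :: real
  assumes flow_0: "\<And>x. \<phi> 0 x = x"
    and flow_ode: "\<And>x s. s \<in> {0..t1} \<Longrightarrow> ((\<lambda>s. \<phi> s x) has_vector_derivative V s (\<phi> s x)) (at s within {0..t1})"
    and field_Cb2: "\<And>s. s \<in> {0..t1} \<Longrightarrow> Cb2 (V s)"
    and field_cb2norm: "\<And>s. s \<in> {0..t1} \<Longrightarrow> cb2norm (V s) \<le> M"
    and horizon: "0 \<le> t1" "t1 \<le> T0"
    and bound_nonneg: "0 \<le> M"
begin

definition growth :: real where "growth = exp (M * T0)"

definition curvature :: real where "curvature = T0 * M * growth ^ 3"

lemma growth_ge_1: "1 \<le> growth"
  unfolding growth_def using bound_nonneg horizon by simp

lemma growth_pos: "0 < growth"
  using growth_ge_1 by simp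

lemma exp_le_growth: "t \<in> {0..t1} \<Longrightarrow> exp (M * t) \<le> growth"
  unfolding growth_def using bound_nonneg horizon by (auto intro: mult_left_mono)

lemma curvature_nonneg: "0 \<le> curvature"
  unfolding curvature_def using horizon bound_nonneg growth_pos by simp

lemma flow_has_vector_derivative:
  "t \<in> {0..t1} \<Longrightarrow> s \<in> {0..t} \<Longrightarrow> ((\<lambda>s. \<phi> s x) has_vector_derivative V s (\<phi> s x)) (at s within {0..t})"
  by (rule has_vector_derivative_within_subset[OF flow_ode]) auto

lemma field_lipschitz: "s \<in> {0..t1} \<Longrightarrow> norm (V s a - V s b) \<le> M * norm (a - b)"
  by (rule Cb2_lipschitz[OF field_Cb2 field_cb2norm])

lemma norm_le_integral_mult_growth:
  fixes f :: "real \<Rightarrow> 'a::euclidean_space"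
  assumes t: "t \<in> {0..t1}" and "f 0 = 0"
    and "\<And>s. s \<in> {0..t} \<Longrightarrow> (f has_vector_derivative f' s) (at s within {0..t})"
    and "\<And>s. s \<in> {0..t} \<Longrightarrow> norm (f' s) \<le> M * norm (f s) + g s"
    and "continuous_on {0..t} g" and g_nonneg: "\<And>s. s \<in> {0..t} \<Longrightarrow> 0 \<le> g s"
  shows "norm (f t) \<le> integral {0..t} g * growth"
proof -
  have "norm (f t) \<le> integral {0..t} g * exp (M * t)"
    using gronwall_ode[of t f f' M g] assms bound_nonneg by simp
  also have "\<dots> \<le> integral {0..t} g * growth"
    using g_nonneg assms(5) exp_le_growth[OF t]
    by (intro mult_left_mono integral_nonneg integrable_continuous_real) auto
  finally show ?thesis .
qed

lemma norm_le_const_mult_growth: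
  fixes f :: "real \<Rightarrow> 'a::euclidean_space"
  assumes t: "t \<in> {0..t1}" and "f 0 = 0"
    and "\<And>s. s \<in> {0..t} \<Longrightarrow> (f has_vector_derivative f' s) (at s within {0..t})"
    and "\<And>s. s \<in> {0..t} \<Longrightarrow> norm (f' s) \<le> M * norm (f s) + c" and c: "0 \<le> c"
  shows "norm (f t) \<le> T0 * c * growth"
proof -
  have "norm (f t) \<le> integral {0..t} (\<lambda>_. c) * growth"
    using assms by (intro norm_le_integral_mult_growth) auto
  also have "\<dots> \<le> T0 * c * growth"
    using t horizon c growth_pos by (simp add: mult_right_mono)
  finally show ?thesis .
qed

lemma flow_lipschitz:
  assumes t: "t \<in> {0..t1}"
  shows "norm (\<phi> t x - \<phi> t y) \<le> growth * norm (x - y)"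
proof -
  have "norm (\<phi> t x - \<phi> t y) \<le> (norm (\<phi> 0 x - \<phi> 0 y) + integral {0..t} (\<lambda>s. 0)) * exp (M * t)"
  proof (rule gronwall_ode[where f="\<lambda>s. \<phi> s x - \<phi> s y" and f'="\<lambda>s. V s (\<phi> s x) - V s (\<phi> s y)"])
    fix s assume s: "s \<in> {0..t}"
    show "((\<lambda>s. \<phi> s x - \<phi> s y) has_vector_derivative V s (\<phi> s x) - V s (\<phi> s y)) (at s within {0..t})"
      by (intro has_vector_derivative_diff flow_has_vector_derivative[OF t s])
    show "norm (V s (\<phi> s x) - V s (\<phi> s y)) \<le> M * norm (\<phi> s x - \<phi> s y) + 0"
      using field_lipschitz s t by simp
  qed (use bound_nonneg t in auto)
  also have "\<dots> \<le> norm (x - y) * growth"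
    using exp_le_growth[OF t] by (simp add: flow_0 mult_left_mono)
  finally show ?thesis by (simp add: mult.commute)
qed

definition flow_incr :: "real \<Rightarrow> 'd R \<Rightarrow> 'd R \<Rightarrow> 'd R" where
  "flow_incr t x w = \<phi> t (x + w) - \<phi> t x"

lemma norm_flow_incr_le: "t \<in> {0..t1} \<Longrightarrow> norm (flow_incr t x w) \<le> growth * norm w"
  unfolding flow_incr_def using flow_lipschitz[of t "x + w" x] by simp

lemma flow_incr_has_vector_derivative:
  "t \<in> {0..t1} \<Longrightarrow> s \<in> {0..t} \<Longrightarrow>
    ((\<lambda>s. flow_incr s x w) has_vector_derivative V s (\<phi> s x + flow_incr s x w) - V s (\<phi> s x)) (at s within {0..t})"
  unfolding flow_incr_def by (auto intro!: has_vector_derivative_diff flow_has_vector_derivative)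

lemma almost_linear_flow_incr:
  assumes t: "t \<in> {0..t1}"
  shows "almost_linear (flow_incr t x) curvature"
  unfolding almost_linear_def
proof (intro allI)
  fix r1 r2 :: real and w1 w2 :: "'d R"
  define u where "u = r1 *\<^sub>R w1 + r2 *\<^sub>R w2"
  define Q where "Q = norm u ^ 2 + \<bar>r1\<bar> * norm w1 ^ 2 + \<bar>r2\<bar> * norm w2 ^ 2"
  define f where "f s = flow_incr s x u - r1 *\<^sub>R flow_incr s x w1 - r2 *\<^sub>R flow_incr s x w2" for s
  have "norm (f t) \<le> T0 * (M * growth ^ 2 * Q) * growth"
  proof (rule norm_le_const_mult_growth[OF t])
    show "f 0 = 0" unfolding f_def flow_incr_def u_def by (simp add: flow_0)
    fix s assume s: "s \<in> {0..t}"
    then have s1: "s \<in> {0..t1}" using t by auto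
    let ?p = "\<phi> s x" and ?a = "flow_incr s x u" and ?b = "flow_incr s x w1" and ?c = "flow_incr s x w2"
    let ?f' = "(V s (?p + ?a) - V s ?p) - r1 *\<^sub>R (V s (?p + ?b) - V s ?p) - r2 *\<^sub>R (V s (?p + ?c) - V s ?p)"
    show "(f has_vector_derivative ?f') (at s within {0..t})"
      unfolding f_def
      by (intro has_vector_derivative_diff bounded_linear.has_vector_derivative[OF bounded_linear_scaleR_right]
          flow_incr_has_vector_derivative[OF t s])
    have sq: "norm (flow_incr s x y) ^ 2 \<le> growth ^ 2 * norm y ^ 2" for y
      using norm_flow_incr_le[OF s1, of x y] by (simp add: power_mono flip: power_mult_distrib)
    have "norm ?f' \<le> M * norm (f s) + M * (norm ?a ^ 2 + \<bar>r1\<bar> * norm ?b ^ 2 + \<bar>r2\<bar> * norm ?c ^ 2)"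
      unfolding f_def by (rule Cb2_increment_combination_le[OF field_Cb2 field_cb2norm, OF s1 s1])
    also have "\<dots> \<le> M * norm (f s)
        + M * (growth ^ 2 * norm u ^ 2 + \<bar>r1\<bar> * (growth ^ 2 * norm w1 ^ 2) + \<bar>r2\<bar> * (growth ^ 2 * norm w2 ^ 2))"
      using bound_nonneg sq by (intro add_left_mono mult_left_mono add_mono) auto
    also have "\<dots> = M * norm (f s) + M * growth ^ 2 * Q"
      unfolding Q_def by (simp add: algebra_simps)
    finally show "norm ?f' \<le> M * norm (f s) + M * growth ^ 2 * Q" .
  qed (unfold Q_def, use bound_nonneg in simp)
  also have "\<dots> = curvature * Q" unfolding curvature_def by (simp add: power3_eq_cube power2_eq_square)
  finally show "norm (flow_incr t x (r1 *\<^sub>R w1 + r2 *\<^sub>R w2) - r1 *\<^sub>R flow_incr t x w1 - r2 *\<^sub>R flow_incr t x w2)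
      \<le> curvature * (norm (r1 *\<^sub>R w1 + r2 *\<^sub>R w2) ^ 2 + \<bar>r1\<bar> * norm w1 ^ 2 + \<bar>r2\<bar> * norm w2 ^ 2)"
    unfolding f_def u_def Q_def .
qed

end

context Cb2_flow
begin

definition Dflow :: "real \<Rightarrow> 'd R \<Rightarrow> 'd R \<Rightarrow> 'd R" where
  "Dflow t x = frechet_derivative (\<phi> t) (at x)"

lemma
  assumes t: "t \<in> {0..t1}"
  shows linear_Dflow: "linear (Dflow t x)"
    and flow_incr_near_Dflow: "norm (flow_incr t x v - Dflow t x v) \<le> 3 * curvature * norm v ^ 2"
proof -
  obtain A where A: "linear A" "\<And>v. norm (flow_incr t x v - A v) \<le> 3 * curvature * norm v ^ 2"
    using almost_linear_imp_near_linear[OF curvature_nonneg almost_linear_flow_incr[OF t]] by blast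
  have deriv: "(\<phi> t has_derivative A) (at x)"
    by (rule has_derivative_of_quadratic_remainder[OF A(1)]) (use A(2) in \<open>simp add: flow_incr_def\<close>)
  then have "A = Dflow t x" unfolding Dflow_def by (rule frechet_derivative_at)
  with A show "linear (Dflow t x)" "norm (flow_incr t x v - Dflow t x v) \<le> 3 * curvature * norm v ^ 2"
    by auto
qed

lemma norm_Dflow_le:
  assumes t: "t \<in> {0..t1}"
  shows "norm (Dflow t x v) \<le> growth * norm v"
proof -
  have "norm (Dflow t x v - 0) \<le> growth * norm v"
    by (rule linear_approximants_diff_le[where \<Delta>="flow_incr t x" and \<Delta>'="\<lambda>_. 0" and A'="\<lambda>_. 0"
          and K="3 * curvature"])
       (simp_all add: linear_Dflow[OF t] flow_incr_near_Dflow[OF t] norm_flow_incr_le[OF t]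
          curvature_nonneg linear_zero)
  then show ?thesis by simp
qed

lemma flow_incr_lipschitz:
  assumes t: "t \<in> {0..t1}"
  shows "norm (flow_incr t x w - flow_incr t y w) \<le> curvature * norm (x - y) * norm w"
proof -
  define f where "f s = flow_incr s x w - flow_incr s y w" for s
  define c where "c = M * growth ^ 2 * norm (x - y) * norm w"
  have "norm (f t) \<le> T0 * c * growth"
  proof (rule norm_le_const_mult_growth[OF t])
    show "f 0 = 0" unfolding f_def flow_incr_def by (simp add: flow_0)
    fix s assume s: "s \<in> {0..t}"
    then have s1: "s \<in> {0..t1}" using t by auto
    let ?p = "\<phi> s x" and ?a = "flow_incr s x w" and ?q = "\<phi> s y" and ?b = "flow_incr s y w"
    show "(f has_vector_derivative (V s (?p + ?a) - V s ?p) - (V s (?q + ?b) - V s ?q)) (at s within {0..t})"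
      unfolding f_def by (intro has_vector_derivative_diff flow_incr_has_vector_derivative[OF t s])
    have "norm ((V s (?p + ?a) - V s ?p) - (V s (?q + ?b) - V s ?q))
        \<le> 0 * norm ?a + M * norm (?p - ?q) * norm ?a + M * norm (f s)"
      unfolding f_def by (rule Cb2_increments_diff_le[OF field_Cb2 field_Cb2 field_cb2norm]) (use s1 in auto)
    also have "M * norm (?p - ?q) * norm ?a \<le> M * (growth * norm (x - y)) * (growth * norm w)"
      using flow_lipschitz[OF s1] norm_flow_incr_le[OF s1] bound_nonneg growth_pos
      by (intro mult_mono mult_left_mono) auto
    finally show "norm ((V s (?p + ?a) - V s ?p) - (V s (?q + ?b) - V s ?q)) \<le> M * norm (f s) + c"
      unfolding c_def by (simp add: power2_eq_square mult_ac)
  qed (unfold c_def, use bound_nonneg in simp)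
  then show ?thesis
    unfolding f_def c_def curvature_def by (simp add: power3_eq_cube power2_eq_square mult_ac)
qed

lemma Dflow_lipschitz:
  assumes t: "t \<in> {0..t1}"
  shows "norm (Dflow t x v - Dflow t y v) \<le> curvature * norm (x - y) * norm v"
  by (rule linear_approximants_diff_le[where \<Delta>="flow_incr t x" and \<Delta>'="flow_incr t y"
        and K="3 * curvature"])
     (simp_all add: linear_Dflow[OF t] flow_incr_near_Dflow[OF t] flow_incr_lipschitz[OF t]
        curvature_nonneg)

end

locale Cb2_flow_pair = f1: Cb2_flow V1 \<phi>1 t1 T0 M + f2: Cb2_flow V2 \<phi>2 t1 T0 M
  for V1 \<phi>1 V2 \<phi>2 :: "real \<Rightarrow> 'd::finite R \<Rightarrow> 'd R" and t1 T0 M +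
  fixes w :: "real \<Rightarrow> real" and CB :: real
  assumes w_cont: "continuous_on {0..t1} w" and w_nonneg: "\<And>s. s \<in> {0..t1} \<Longrightarrow> 0 \<le> w s"
    and CB_nonneg: "0 \<le> CB"
    and fields_diff: "\<And>s y. s \<in> {0..t1} \<Longrightarrow> norm (V1 s y - V2 s y) \<le> CB * w s"
    and fields_Dsp_diff: "\<And>s y. s \<in> {0..t1} \<Longrightarrow> norm (Dsp (V1 s) y - Dsp (V2 s) y) \<le> CB * w s"
begin

definition w_integral :: "real \<Rightarrow> real" where "w_integral t = integral {0..t} w"

definition pair_const :: real where "pair_const = CB * f1.growth ^ 2 * (1 + T0 * M * f1.growth)"

lemma pair_const_nonneg: "0 \<le> pair_const"
  unfolding pair_const_def using CB_nonneg f1.horizon f1.bound_nonneg f1.growth_pos by simp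

lemma w_integrable: "t \<in> {0..t1} \<Longrightarrow> w integrable_on {0..t}"
  by (rule integrable_continuous_real[OF continuous_on_subset[OF w_cont]]) auto

lemma w_integral_nonneg: "t \<in> {0..t1} \<Longrightarrow> 0 \<le> w_integral t"
  unfolding w_integral_def by (rule integral_nonneg[OF w_integrable]) (use w_nonneg in auto)

lemma w_integral_mono: "t \<in> {0..t1} \<Longrightarrow> s \<in> {0..t} \<Longrightarrow> w_integral s \<le> w_integral t"
  unfolding w_integral_def by (rule integral_subset_le) (use w_integrable w_nonneg in auto)

lemma flows_diff_le:
  assumes t: "t \<in> {0..t1}"
  shows "norm (\<phi>1 t x - \<phi>2 t x) \<le> CB * f1.growth * w_integral t"
proof -
  have "norm (\<phi>1 t x - \<phi>2 t x) \<le> integral {0..t} (\<lambda>s. CB * w s) * f1.growth"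
  proof (rule f1.norm_le_integral_mult_growth[OF t])
    fix s assume s: "s \<in> {0..t}"
    then have s1: "s \<in> {0..t1}" using t by auto
    show "((\<lambda>s. \<phi>1 s x - \<phi>2 s x) has_vector_derivative V1 s (\<phi>1 s x) - V2 s (\<phi>2 s x)) (at s within {0..t})"
      by (intro has_vector_derivative_diff f1.flow_has_vector_derivative[OF t s]
          f2.flow_has_vector_derivative[OF t s])
    have "norm (V1 s (\<phi>1 s x) - V2 s (\<phi>2 s x))
        \<le> norm (V1 s (\<phi>1 s x) - V2 s (\<phi>1 s x)) + norm (V2 s (\<phi>1 s x) - V2 s (\<phi>2 s x))"
      by (rule order_trans[OF _ norm_triangle_ineq]) simp
    also have "\<dots> \<le> CB * w s + M * norm (\<phi>1 s x - \<phi>2 s x)"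
      using fields_diff[OF s1] f2.field_lipschitz[OF s1] by (intro add_mono)
    finally show "norm (V1 s (\<phi>1 s x) - V2 s (\<phi>2 s x)) \<le> M * norm (\<phi>1 s x - \<phi>2 s x) + CB * w s"
      by simp
    show "0 \<le> CB * w s" using CB_nonneg w_nonneg[OF s1] by simp
  qed (use t in \<open>auto intro!: continuous_intros continuous_on_subset[OF w_cont] simp: f1.flow_0 f2.flow_0\<close>)
  then show ?thesis unfolding w_integral_def by (simp add: mult_ac)
qed

lemma flow_incr_diff_le:
  assumes t: "t \<in> {0..t1}"
  shows "norm (f1.flow_incr t x v - f2.flow_incr t x v) \<le> pair_const * w_integral t * norm v"
proof -
  let ?E = f1.growth
  define c where "c = M * (CB * ?E * w_integral t) * (?E * norm v)"
  have c: "0 \<le> c" unfolding c_def using f1.bound_nonneg CB_nonneg f1.growth_pos w_integral_nonneg[OF t] by simp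
  let ?g = "\<lambda>s. (CB * ?E * norm v) * w s + c"
  have "norm (f1.flow_incr t x v - f2.flow_incr t x v) \<le> integral {0..t} ?g * ?E"
  proof (rule f1.norm_le_integral_mult_growth[OF t])
    show "f1.flow_incr 0 x v - f2.flow_incr 0 x v = 0"
      unfolding f1.flow_incr_def f2.flow_incr_def by (simp add: f1.flow_0 f2.flow_0)
    fix s assume s: "s \<in> {0..t}"
    then have s1: "s \<in> {0..t1}" using t by auto
    let ?q = "\<phi>1 s x" and ?a = "f1.flow_incr s x v" and ?p = "\<phi>2 s x" and ?b = "f2.flow_incr s x v"
    show "((\<lambda>s. f1.flow_incr s x v - f2.flow_incr s x v) has_vector_derivative
        (V1 s (?q + ?a) - V1 s ?q) - (V2 s (?p + ?b) - V2 s ?p)) (at s within {0..t})"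
      by (intro has_vector_derivative_diff f1.flow_incr_has_vector_derivative[OF t s]
          f2.flow_incr_has_vector_derivative[OF t s])
    have a: "norm ?a \<le> ?E * norm v" by (rule f1.norm_flow_incr_le[OF s1])
    have "norm (?q - ?p) \<le> CB * ?E * w_integral t"
      using flows_diff_le[OF s1, of x] w_integral_mono[OF t s] CB_nonneg f1.growth_pos
      by (meson mult_left_mono order_trans mult_nonneg_nonneg less_imp_le)
    then have "norm (?q - ?p) * norm ?a \<le> (CB * ?E * w_integral t) * (?E * norm v)"
      using a CB_nonneg f1.growth_pos w_integral_nonneg[OF t] by (intro mult_mono) auto
    then have qp: "M * norm (?q - ?p) * norm ?a \<le> c"
      unfolding c_def using f1.bound_nonneg by (simp add: mult.assoc mult_left_mono)
    have "norm ((V1 s (?q + ?a) - V1 s ?q) - (V2 s (?p + ?b) - V2 s ?p))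
        \<le> CB * w s * norm ?a + M * norm (?q - ?p) * norm ?a + M * norm (?a - ?b)"
      by (rule Cb2_increments_diff_le[OF f1.field_Cb2 f2.field_Cb2 f2.field_cb2norm fields_Dsp_diff])
         (use s1 in auto)
    also have "CB * w s * norm ?a \<le> (CB * ?E * norm v) * w s"
      using mult_left_mono[OF a, of "CB * w s"] CB_nonneg w_nonneg[OF s1] by (simp add: mult_ac)
    finally show "norm ((V1 s (?q + ?a) - V1 s ?q) - (V2 s (?p + ?b) - V2 s ?p))
        \<le> M * norm (?a - ?b) + ?g s"
      using qp by simp
    show "0 \<le> ?g s" using CB_nonneg f1.growth_pos w_nonneg[OF s1] c by simp
  qed (use t in \<open>auto intro!: continuous_intros continuous_on_subset[OF w_cont]\<close>)
  also have "integral {0..t} ?g = (CB * ?E * norm v) * w_integral t + t * c"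
    unfolding w_integral_def using w_integrable[OF t] t
    by (subst integral_add) (auto simp: integrable_on_mult_right)
  also have "((CB * ?E * norm v) * w_integral t + t * c) * ?E \<le> ((CB * ?E * norm v) * w_integral t + T0 * c) * ?E"
    using t f1.horizon c f1.growth_pos by (intro mult_right_mono add_left_mono mult_right_mono) auto
  also have "\<dots> = pair_const * w_integral t * norm v"
    unfolding pair_const_def c_def by (simp add: power2_eq_square algebra_simps)
  finally show ?thesis .
qed

lemma Dflow_diff_le:
  assumes t: "t \<in> {0..t1}"
  shows "norm (f1.Dflow t x v - f2.Dflow t x v) \<le> pair_const * w_integral t * norm v"
  by (rule linear_approximants_diff_le[where \<Delta>="f1.flow_incr t x" and \<Delta>'="f2.flow_incr t x"
        and K="3 * f1.curvature"])
     (use f1.linear_Dflow[OF t] f2.linear_Dflow[OF t] f1.flow_incr_near_Dflow[OF t]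
        f2.flow_incr_near_Dflow[OF t] flow_incr_diff_le[OF t] f1.curvature_nonneg
      in \<open>simp_all add: mult.assoc\<close>)

end

section \<open>Push-forward along the flow\<close>

lemma transpose_matrix_nth: "transpose (matrix f) $ k = f (axis k 1)"
  by (simp add: vec_eq_iff transpose_def matrix_def)

lemma transpose_matrix_mult_vector: "transpose (matrix f) *v u = (\<chi> k. inner (f (axis k 1)) u)"
  unfolding vec_eq_iff matrix_vector_mul_component transpose_matrix_nth by simp

lemma pf_field_eq_inner:
  "pf_field \<phi> \<theta> x = (\<chi> k. inner (frechet_derivative \<phi> (at x) (axis k 1)) (\<theta> (\<phi> x)))"
  by (simp only: pf_field_def transpose_matrix_mult_vector)

lemma norm_vec_lambda_le:
  fixes c :: "'d::finite \<Rightarrow> real"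
  assumes "\<And>k. \<bar>c k\<bar> \<le> b"
  shows "norm (\<chi> k. c k) \<le> real CARD('d) * b"
proof -
  have "norm (\<chi> k. c k) \<le> (\<Sum>k\<in>UNIV. \<bar>(\<chi> k. c k) $ k\<bar>)" by (rule norm_le_l1_cart)
  also have "\<dots> \<le> (\<Sum>k\<in>(UNIV::'d set). b)" by (rule sum_mono) (simp add: assms)
  finally show ?thesis by simp
qed

lemma vec_lambda_diff: "(\<chi> k. f k) - (\<chi> k. g k) = (\<chi> k. f k - g k)"
  by (simp add: vec_eq_iff)

lemma abs_inner_diff_le:
  fixes a b u u' :: "'a::real_inner"
  shows "\<bar>inner a u - inner b u'\<bar> \<le> norm (a - b) * norm u + norm b * norm (u - u')"
proof -
  have "inner a u - inner b u' = inner (a - b) u + inner b (u - u')"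
    by (simp add: inner_diff_left inner_diff_right)
  also have "\<bar>\<dots>\<bar> \<le> \<bar>inner (a - b) u\<bar> + \<bar>inner b (u - u')\<bar>" by (rule abs_triangle_ineq)
  also have "\<dots> \<le> norm (a - b) * norm u + norm b * norm (u - u')"
    by (intro add_mono Cauchy_Schwarz_ineq2)
  finally show ?thesis .
qed

context Cb2_flow
begin

lemma pf_field_eq: "pf_field (\<phi> t) \<theta> x = (\<chi> k. inner (Dflow t x (axis k 1)) (\<theta> (\<phi> t x)))"
  unfolding pf_field_eq_inner Dflow_def ..

lemma flow_continuous: "t \<in> {0..t1} \<Longrightarrow> continuous_on UNIV (\<phi> t)"
  by (rule lipschitz_on_continuous_on[where L=growth], rule lipschitz_onI)
     (use flow_lipschitz growth_pos in \<open>auto simp: dist_norm\<close>)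

lemma Dflow_continuous: "t \<in> {0..t1} \<Longrightarrow> continuous_on UNIV (\<lambda>x. Dflow t x v)"
  by (rule lipschitz_on_continuous_on[where L="curvature * norm v"], rule lipschitz_onI)
     (use Dflow_lipschitz curvature_nonneg in \<open>auto simp: dist_norm mult_ac\<close>)

lemma norm_pf_field_le:
  assumes t: "t \<in> {0..t1}"
  shows "norm (pf_field (\<phi> t) \<theta> x) \<le> real CARD('d) * (growth * norm \<theta>)"
  unfolding pf_field_eq
proof (rule norm_vec_lambda_le)
  fix k
  have "\<bar>inner (Dflow t x (axis k 1)) (\<theta> (\<phi> t x))\<bar> \<le> norm (Dflow t x (axis k 1)) * norm (\<theta> (\<phi> t x))"
    by (rule Cauchy_Schwarz_ineq2)
  also have "\<dots> \<le> growth * norm \<theta>"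
    using norm_Dflow_le[OF t, of x "axis k 1"] norm_bounded[of \<theta> "\<phi> t x"] growth_pos
    by (intro mult_mono) auto
  finally show "\<bar>inner (Dflow t x (axis k 1)) (\<theta> (\<phi> t x))\<bar> \<le> growth * norm \<theta>" .
qed

lemma pf_field_bcontfun: "t \<in> {0..t1} \<Longrightarrow> pf_field (\<phi> t) \<theta> \<in> bcontfun"
proof (rule bcontfun_normI[OF _ norm_pf_field_le])
  assume t: "t \<in> {0..t1}"
  have "continuous_on UNIV (\<lambda>x. \<theta> (\<phi> t x))"
    by (rule continuous_on_compose2[OF continuous_on_apply_bcontfun flow_continuous[OF t]]) auto
  then show "continuous_on UNIV (pf_field (\<phi> t) \<theta>)"
    unfolding pf_field_eq by (intro continuous_on_vec_lambda continuous_on_inner Dflow_continuous[OF t])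
qed

lemma apply_Bcontfun_pf_field [simp]:
  "t \<in> {0..t1} \<Longrightarrow> apply_bcontfun (Bcontfun (pf_field (\<phi> t) \<theta>)) = pf_field (\<phi> t) \<theta>"
  by (simp add: Bcontfun_inverse pf_field_bcontfun)

lemma norm_Bcontfun_pf_field_le:
  "t \<in> {0..t1} \<Longrightarrow> norm (Bcontfun (pf_field (\<phi> t) \<theta>)) \<le> real CARD('d) * (growth * norm \<theta>)"
  by (rule norm_bound) (simp add: norm_pf_field_le)

lemma pf_field_lipschitz:
  assumes t: "t \<in> {0..t1}" and L: "L-lipschitz_on UNIV (apply_bcontfun \<theta>)"
  shows "(real CARD('d) * (curvature * norm \<theta> + growth ^ 2 * L))-lipschitz_on UNIV (pf_field (\<phi> t) \<theta>)"
proof (rule lipschitz_onI)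
  have L0: "0 \<le> L" using L lipschitz_on_nonneg by auto
  show "0 \<le> real CARD('d) * (curvature * norm \<theta> + growth ^ 2 * L)"
    using curvature_nonneg L0 by simp
  fix x y
  have "norm (pf_field (\<phi> t) \<theta> x - pf_field (\<phi> t) \<theta> y)
      \<le> real CARD('d) * ((curvature * norm \<theta> + growth ^ 2 * L) * dist x y)"
    unfolding pf_field_eq vec_lambda_diff
  proof (rule norm_vec_lambda_le)
    fix k
    let ?a = "Dflow t x (axis k 1)" and ?b = "Dflow t y (axis k 1)"
    have "\<bar>inner ?a (\<theta> (\<phi> t x)) - inner ?b (\<theta> (\<phi> t y))\<bar>
        \<le> norm (?a - ?b) * norm (\<theta> (\<phi> t x)) + norm ?b * norm (\<theta> (\<phi> t x) - \<theta> (\<phi> t y))"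
      by (rule abs_inner_diff_le)
    also have "\<dots> \<le> (curvature * dist x y) * norm \<theta> + growth * (L * (growth * dist x y))"
    proof (intro add_mono mult_mono)
      show "norm (?a - ?b) \<le> curvature * dist x y"
        using Dflow_lipschitz[OF t, of x "axis k 1" y] by (simp add: dist_norm)
      show "norm ?b \<le> growth" using norm_Dflow_le[OF t, of y "axis k 1"] by simp
      have "norm (\<theta> (\<phi> t x) - \<theta> (\<phi> t y)) \<le> L * norm (\<phi> t x - \<phi> t y)"
        using lipschitz_onD[OF L, of "\<phi> t x" "\<phi> t y"] by (simp add: dist_norm)
      also have "\<dots> \<le> L * (growth * dist x y)"
        using flow_lipschitz[OF t, of x y] L0 by (simp add: dist_norm mult_left_mono)
      finally show "norm (\<theta> (\<phi> t x) - \<theta> (\<phi> t y)) \<le> L * (growth * dist x y)" .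
    qed (use curvature_nonneg growth_pos L0 norm_bounded in auto)
    also have "\<dots> = (curvature * norm \<theta> + growth ^ 2 * L) * dist x y"
      by (simp add: power2_eq_square algebra_simps)
    finally show "\<bar>inner ?a (\<theta> (\<phi> t x)) - inner ?b (\<theta> (\<phi> t y))\<bar>
        \<le> (curvature * norm \<theta> + growth ^ 2 * L) * dist x y" .
  qed
  then show "dist (pf_field (\<phi> t) \<theta> x) (pf_field (\<phi> t) \<theta> y)
      \<le> real CARD('d) * (curvature * norm \<theta> + growth ^ 2 * L) * dist x y"
    by (simp add: dist_norm mult.assoc)
qed

lemma bounded_linear_pf_field:
  assumes t: "t \<in> {0..t1}"
  shows "bounded_linear (\<lambda>\<theta>. Bcontfun (pf_field (\<phi> t) \<theta>))"
proof (rule bounded_linear_intro)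
  fix \<theta>1 \<theta>2 :: "'d field" and r :: real and \<theta> :: "'d field"
  show "Bcontfun (pf_field (\<phi> t) (\<theta>1 + \<theta>2)) = Bcontfun (pf_field (\<phi> t) \<theta>1) + Bcontfun (pf_field (\<phi> t) \<theta>2)"
    using t by (intro bcontfun_eqI) (simp add: pf_field_eq vec_eq_iff inner_add_right)
  show "Bcontfun (pf_field (\<phi> t) (r *\<^sub>R \<theta>)) = r *\<^sub>R Bcontfun (pf_field (\<phi> t) \<theta>)"
    using t by (intro bcontfun_eqI) (simp add: pf_field_eq vec_eq_iff)
  show "norm (Bcontfun (pf_field (\<phi> t) \<theta>)) \<le> norm \<theta> * (real CARD('d) * growth)"
    using norm_Bcontfun_pf_field_le[OF t] by (simp add: mult_ac)
qed

lemma pf_meas_apply: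
  "t \<in> {0..t1} \<Longrightarrow> blinfun_apply (pf_meas (\<phi> t) \<xi>) \<theta> = blinfun_apply \<xi> (Bcontfun (pf_field (\<phi> t) \<theta>))"
  unfolding pf_meas_def
  by (simp add: bounded_linear_Blinfun_apply bounded_linear_compose[OF blinfun.bounded_linear_right
      bounded_linear_pf_field])

definition pf_expansion :: real where
  "pf_expansion = real CARD('d) * (growth + curvature + growth ^ 2)"

lemma pf_expansion_nonneg: "0 \<le> pf_expansion"
  unfolding pf_expansion_def using growth_pos curvature_nonneg by simp

lemma pf_meas_diff: "t \<in> {0..t1} \<Longrightarrow> pf_meas (\<phi> t) (\<xi> - \<xi>') = pf_meas (\<phi> t) \<xi> - pf_meas (\<phi> t) \<xi>'"
  by (rule blinfun_eqI) (simp add: pf_meas_apply blinfun.diff_left)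

lemma wnorm_pf_meas_le:
  assumes t: "t \<in> {0..t1}"
  shows "wnorm (pf_meas (\<phi> t) \<xi>) \<le> pf_expansion * wnorm \<xi>"
proof (rule wnorm_leI)
  fix \<theta> :: "'d field" and L
  assume L: "L-lipschitz_on UNIV (apply_bcontfun \<theta>)" and unit: "norm \<theta> + L \<le> 1"
  have unit': "norm \<theta> \<le> 1" "L \<le> 1" using unit lipschitz_on_nonneg[OF L] norm_ge_zero[of \<theta>] by linarith+
  have "blinfun_apply (pf_meas (\<phi> t) \<xi>) \<theta> \<le> wnorm \<xi>
      * (real CARD('d) * (growth * norm \<theta>) + real CARD('d) * (curvature * norm \<theta> + growth ^ 2 * L))"
    unfolding pf_meas_apply[OF t]
    by (rule apply_le_wnorm)
       (simp_all add: pf_field_lipschitz[OF t L] norm_Bcontfun_pf_field_le[OF t] apply_Bcontfun_pf_field[OF t])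
  also have "\<dots> \<le> wnorm \<xi> * pf_expansion"
  proof (intro mult_left_mono wnorm_nonneg)
    have "growth * norm \<theta> \<le> growth" "curvature * norm \<theta> \<le> curvature" "growth ^ 2 * L \<le> growth ^ 2"
      using unit' growth_pos curvature_nonneg by (simp_all add: mult_left_le)
    then show "real CARD('d) * (growth * norm \<theta>)
        + real CARD('d) * (curvature * norm \<theta> + growth ^ 2 * L) \<le> pf_expansion"
      unfolding pf_expansion_def distrib_left[symmetric] by (intro mult_left_mono) auto
  qed
  finally show "blinfun_apply (pf_meas (\<phi> t) \<xi>) \<theta> \<le> pf_expansion * wnorm \<xi>"
    by (simp add: mult.commute)
qed

end

context Cb2_flow_pair
begin

lemma norm_pf_field_diff_le:
  assumes t: "t \<in> {0..t1}" and L: "L-lipschitz_on UNIV (apply_bcontfun \<theta>)"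
  shows "norm (Bcontfun (pf_field (\<phi>1 t) \<theta>) - Bcontfun (pf_field (\<phi>2 t) \<theta>))
     \<le> real CARD('d) * ((pair_const * norm \<theta> + CB * f1.growth ^ 2 * L) * w_integral t)"
proof (rule norm_bound)
  have L0: "0 \<le> L" using L lipschitz_on_nonneg by auto
  fix x
  have "apply_bcontfun (Bcontfun (pf_field (\<phi>1 t) \<theta>) - Bcontfun (pf_field (\<phi>2 t) \<theta>)) x
      = (\<chi> k. inner (f1.Dflow t x (axis k 1)) (\<theta> (\<phi>1 t x)) - inner (f2.Dflow t x (axis k 1)) (\<theta> (\<phi>2 t x)))"
    using t by (simp add: f1.pf_field_eq f2.pf_field_eq vec_lambda_diff)
  also have "norm \<dots> \<le> real CARD('d) * ((pair_const * norm \<theta> + CB * f1.growth ^ 2 * L) * w_integral t)"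
  proof (rule norm_vec_lambda_le)
    fix k
    let ?a = "f1.Dflow t x (axis k 1)" and ?b = "f2.Dflow t x (axis k 1)"
    have "\<bar>inner ?a (\<theta> (\<phi>1 t x)) - inner ?b (\<theta> (\<phi>2 t x))\<bar>
        \<le> norm (?a - ?b) * norm (\<theta> (\<phi>1 t x)) + norm ?b * norm (\<theta> (\<phi>1 t x) - \<theta> (\<phi>2 t x))"
      by (rule abs_inner_diff_le)
    also have "\<dots> \<le> (pair_const * w_integral t) * norm \<theta> + f1.growth * (L * (CB * f1.growth * w_integral t))"
    proof (intro add_mono mult_mono)
      show "norm (?a - ?b) \<le> pair_const * w_integral t"
        using Dflow_diff_le[OF t, of x "axis k 1"] by simp
      show "norm ?b \<le> f1.growth" using f2.norm_Dflow_le[OF t, of x "axis k 1"] by simp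
      have "norm (\<theta> (\<phi>1 t x) - \<theta> (\<phi>2 t x)) \<le> L * norm (\<phi>1 t x - \<phi>2 t x)"
        using lipschitz_onD[OF L, of "\<phi>1 t x" "\<phi>2 t x"] by (simp add: dist_norm)
      also have "\<dots> \<le> L * (CB * f1.growth * w_integral t)"
        using flows_diff_le[OF t, of x] L0 by (simp add: mult_left_mono)
      finally show "norm (\<theta> (\<phi>1 t x) - \<theta> (\<phi>2 t x)) \<le> L * (CB * f1.growth * w_integral t)" .
    qed (use pair_const_nonneg w_integral_nonneg[OF t] f1.growth_pos L0 CB_nonneg norm_bounded in auto)
    also have "\<dots> = (pair_const * norm \<theta> + CB * f1.growth ^ 2 * L) * w_integral t"
      by (simp add: power2_eq_square algebra_simps)
    finally show "\<bar>inner ?a (\<theta> (\<phi>1 t x)) - inner ?b (\<theta> (\<phi>2 t x))\<bar>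
        \<le> (pair_const * norm \<theta> + CB * f1.growth ^ 2 * L) * w_integral t" .
  qed
  finally show "norm (apply_bcontfun (Bcontfun (pf_field (\<phi>1 t) \<theta>) - Bcontfun (pf_field (\<phi>2 t) \<theta>)) x)
      \<le> real CARD('d) * ((pair_const * norm \<theta> + CB * f1.growth ^ 2 * L) * w_integral t)" .
qed

definition pf_sensitivity :: "'d meas \<Rightarrow> real" where
  "pf_sensitivity \<xi> = norm \<xi> * real CARD('d) * (pair_const + CB * f1.growth ^ 2)"

lemma pf_sensitivity_nonneg: "0 \<le> pf_sensitivity \<xi>"
  unfolding pf_sensitivity_def using f1.growth_pos pair_const_nonneg CB_nonneg by simp

lemma wnorm_pf_meas_flows_diff_le:
  assumes t: "t \<in> {0..t1}"
  shows "wnorm (pf_meas (\<phi>1 t) \<xi> - pf_meas (\<phi>2 t) \<xi>) \<le> pf_sensitivity \<xi> * w_integral t"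
proof (rule wnorm_leI)
  fix \<theta> :: "'d field" and L
  assume L: "L-lipschitz_on UNIV (apply_bcontfun \<theta>)" and unit: "norm \<theta> + L \<le> 1"
  have unit': "norm \<theta> \<le> 1" "L \<le> 1" using unit lipschitz_on_nonneg[OF L] norm_ge_zero[of \<theta>] by linarith+
  let ?B1 = "Bcontfun (pf_field (\<phi>1 t) \<theta>)" and ?B2 = "Bcontfun (pf_field (\<phi>2 t) \<theta>)"
  have "blinfun_apply (pf_meas (\<phi>1 t) \<xi> - pf_meas (\<phi>2 t) \<xi>) \<theta> = blinfun_apply \<xi> (?B1 - ?B2)"
    by (simp add: f1.pf_meas_apply[OF t] f2.pf_meas_apply[OF t] blinfun.diff_left blinfun.diff_right)
  also have "\<dots> \<le> norm \<xi> * norm (?B1 - ?B2)"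
    using norm_blinfun[of \<xi> "?B1 - ?B2"] by simp
  also have "\<dots> \<le> norm \<xi> * (real CARD('d) * ((pair_const * norm \<theta> + CB * f1.growth ^ 2 * L) * w_integral t))"
    by (rule mult_left_mono[OF norm_pf_field_diff_le[OF t L]]) simp
  also have "\<dots> \<le> pf_sensitivity \<xi> * w_integral t"
    unfolding pf_sensitivity_def using unit' pair_const_nonneg CB_nonneg w_integral_nonneg[OF t]
    by (simp add: mult.assoc mult_left_mono mult_right_mono add_mono mult_left_le)
  finally show "blinfun_apply (pf_meas (\<phi>1 t) \<xi> - pf_meas (\<phi>2 t) \<xi>) \<theta> \<le> pf_sensitivity \<xi> * w_integral t" .
qed

lemma wnorm_pf_meas_diff_le:
  assumes t: "t \<in> {0..t1}"
  shows "wnorm (pf_meas (\<phi>1 t) \<xi>a - pf_meas (\<phi>2 t) \<xi>b)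
    \<le> f1.pf_expansion * wnorm (\<xi>a - \<xi>b) + pf_sensitivity \<xi>b * w_integral t"
proof -
  have "pf_meas (\<phi>1 t) \<xi>a - pf_meas (\<phi>2 t) \<xi>b
      = pf_meas (\<phi>1 t) (\<xi>a - \<xi>b) + (pf_meas (\<phi>1 t) \<xi>b - pf_meas (\<phi>2 t) \<xi>b)"
    using f1.pf_meas_diff[OF t, of \<xi>a \<xi>b] by simp
  then have "wnorm (pf_meas (\<phi>1 t) \<xi>a - pf_meas (\<phi>2 t) \<xi>b)
      \<le> wnorm (pf_meas (\<phi>1 t) (\<xi>a - \<xi>b)) + wnorm (pf_meas (\<phi>1 t) \<xi>b - pf_meas (\<phi>2 t) \<xi>b)"
    by (simp only: wnorm_triangle)
  also have "\<dots> \<le> f1.pf_expansion * wnorm (\<xi>a - \<xi>b) + pf_sensitivity \<xi>b * w_integral t"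
    by (intro add_mono f1.wnorm_pf_meas_le[OF t] wnorm_pf_meas_flows_diff_le[OF t])
  finally show ?thesis .
qed

end

section \<open>Stability of solutions\<close>

lemma continuous_on_wnorm_diff:
  fixes a b :: "real \<Rightarrow> 'd::finite meas"
  assumes a: "wcont_on T a" and b: "wcont_on T b" and S: "S \<subseteq> {0..T}"
  shows "continuous_on S (\<lambda>s. wnorm (a s - b s))"
proof -
  have "continuous_on {0..T} (\<lambda>s. wnorm (a s - b s))"
    unfolding continuous_on_iff
  proof (intro ballI allI impI)
    fix t e assume t: "t \<in> {0..T}" and e: "(0::real) < e"
    obtain d1 where d1: "d1 > 0" "\<And>s. s \<in> {0..T} \<Longrightarrow> \<bar>s - t\<bar> < d1 \<Longrightarrow> wnorm (a s - a t) < e/2"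
      using a t e unfolding wcont_on_def by (meson half_gt_zero)
    obtain d2 where d2: "d2 > 0" "\<And>s. s \<in> {0..T} \<Longrightarrow> \<bar>s - t\<bar> < d2 \<Longrightarrow> wnorm (b s - b t) < e/2"
      using b t e unfolding wcont_on_def by (meson half_gt_zero)
    show "\<exists>d>0. \<forall>s\<in>{0..T}. dist s t < d \<longrightarrow> dist (wnorm (a s - b s)) (wnorm (a t - b t)) < e"
    proof (intro exI[of _ "min d1 d2"] conjI ballI impI)
      show "0 < min d1 d2" using d1 d2 by simp
      fix s assume s: "s \<in> {0..T}" "dist s t < min d1 d2"
      have "\<bar>wnorm (a s - b s) - wnorm (a t - b t)\<bar> \<le> wnorm ((a s - b s) - (a t - b t))"
        by (rule abs_wnorm_diff_le)
      also have "(a s - b s) - (a t - b t) = (a s - a t) + - (b s - b t)" by simp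
      also have "wnorm \<dots> \<le> wnorm (a s - a t) + wnorm (b s - b t)"
        using wnorm_triangle[of "a s - a t" "- (b s - b t)"] by (simp only: wnorm_minus)
      also have "\<dots> < e/2 + e/2"
        using d1(2)[OF s(1)] d2(2)[OF s(1)] s(2) by (intro add_strict_mono) (auto simp: dist_real_def)
      finally show "dist (wnorm (a s - b s)) (wnorm (a t - b t)) < e" by (simp add: dist_real_def)
    qed
  qed
  then show ?thesis using S by (rule continuous_on_subset)
qed

lemma wcont_on_bounded:
  fixes a :: "real \<Rightarrow> 'd::finite meas"
  assumes "wcont_on T a"
  obtains R where "R \<ge> 0" "\<And>t. t \<in> {0..T} \<Longrightarrow> wnorm (a t) \<le> R"
proof -
  have "wcont_on T (\<lambda>_. 0::'d meas)" unfolding wcont_on_def by (auto simp: wnorm_zero)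
  then have "continuous_on {0..T} (\<lambda>s. wnorm (a s - 0))"
    by (rule continuous_on_wnorm_diff[OF assms]) simp
  then have "compact ((\<lambda>s. wnorm (a s)) ` {0..T})" by (intro compact_continuous_image) auto
  then obtain R where R: "\<forall>x\<in>(\<lambda>s. wnorm (a s)) ` {0..T}. norm x \<le> R"
    using compact_imp_bounded[OF \<open>compact _\<close>] unfolding bounded_iff by blast
  show ?thesis by (rule that[of "max R 0"]) (use R in \<open>force simp: le_max_iff_disj\<close>)+
qed

lemma solution_Cb2_flow:
  assumes sa: "standing_assms B CB" and sol: "is_solution B T a0 a"
    and t1: "t1 \<in> {0..T}" and R: "R \<ge> 0" and bound: "\<And>s. s \<in> {0..t1} \<Longrightarrow> wnorm (a s) \<le> R"
  obtains \<phi> where "Cb2_flow (\<lambda>s. B (a s)) \<phi> t1 T (CB * (R + 1))"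
    and "\<And>t. t \<in> {0..T} \<Longrightarrow> a t = pf_meas (\<phi> t) a0"
proof -
  obtain \<phi> where flow: "is_flow B T a \<phi>" and pf: "\<And>t. t \<in> {0..T} \<Longrightarrow> a t = pf_meas (\<phi> t) a0"
    using sol unfolding is_solution_def by blast
  have sub: "{0..t1} \<subseteq> {0..T}" using t1 by auto
  have "Cb2_flow (\<lambda>s. B (a s)) \<phi> t1 T (CB * (R + 1))"
  proof
    show "\<phi> 0 x = x" for x using flow unfolding is_flow_def by auto
    show "((\<lambda>s. \<phi> s x) has_vector_derivative B (a s) (\<phi> s x)) (at s within {0..t1})"
      if "s \<in> {0..t1}" for x s
    proof (rule has_vector_derivative_within_subset[OF _ sub])
      show "((\<lambda>s. \<phi> s x) has_vector_derivative B (a s) (\<phi> s x)) (at s within {0..T})"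
        using flow that sub unfolding is_flow_def by blast
    qed
    show "Cb2 (B (a s))" for s by (rule standing_assms_Cb2[OF sa])
    show "cb2norm (B (a s)) \<le> CB * (R + 1)" if "s \<in> {0..t1}" for s
      by (rule order_trans[OF standing_assms_cb2norm_le[OF sa] mult_left_mono])
         (use bound[OF that] standing_assms_pos[OF sa] in auto)
    show "0 \<le> t1" "t1 \<le> T" using t1 by auto
    show "0 \<le> CB * (R + 1)" using standing_assms_pos[OF sa] R by simp
  qed
  with pf that show ?thesis by blast
qed

text \<open>The constant \<open>pf_expansion * exp (pf_sensitivity b0 * T)\<close> of two flows of fields bounded
  by \<open>CB * (R + 1)\<close> in \<open>C\<^sub>b\<^sup>2\<close>, written out; \<open>d\<close> stands for the dimension.\<close>

definition stability_const :: "real \<Rightarrow> real \<Rightarrow> real \<Rightarrow> real \<Rightarrow> real \<Rightarrow> real" where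
  "stability_const d CB T R nb = (let M = CB * (R + 1); E = exp (M * T) in
     d * (E + T * M * E ^ 3 + E ^ 2) * exp (nb * d * (CB * E ^ 2 * (1 + T * M * E) + CB * E ^ 2) * T))"

lemma stability_const_ge_1:
  assumes "d \<ge> 1" "CB \<ge> 0" "R \<ge> 0" "T \<ge> 0" "nb \<ge> 0"
  shows "1 \<le> stability_const d CB T R nb"
proof -
  define M where "M = CB * (R + 1)"
  define E where "E = exp (M * T)"
  have M: "M \<ge> 0" unfolding M_def using assms by simp
  have E: "E \<ge> 1" unfolding E_def using M assms by simp
  have "1 \<le> d * (E + T * M * E ^ 3 + E ^ 2)"
    using mult_mono[OF assms(1), of 1 "E + T * M * E ^ 3 + E ^ 2"] E M assms by (simp add: add_increasing2)
  moreover have "1 \<le> exp (nb * d * (CB * E ^ 2 * (1 + T * M * E) + CB * E ^ 2) * T)"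
    using assms M E by simp
  ultimately show ?thesis
    unfolding stability_const_def Let_def M_def[symmetric] E_def[symmetric]
    using mult_mono by fastforce
qed

lemma solutions_dist_le:
  fixes B :: "'d::finite meas \<Rightarrow> ('d R \<Rightarrow> 'd R)"
  assumes sa: "standing_assms B CB"
    and sol_a: "is_solution B T a0 a" and sol_b: "is_solution B T b0 b"
    and t1: "t1 \<in> {0..T}" and R: "R \<ge> 0"
    and bound_a: "\<And>s. s \<in> {0..t1} \<Longrightarrow> wnorm (a s) \<le> R"
    and bound_b: "\<And>s. s \<in> {0..t1} \<Longrightarrow> wnorm (b s) \<le> R"
    and t: "t \<in> {0..t1}"
  shows "wnorm (a t - b t) \<le> stability_const (real CARD('d)) CB T R (norm b0) * wnorm (a0 - b0)"
proof -
  obtain \<phi>1 where flow_a: "Cb2_flow (\<lambda>s. B (a s)) \<phi>1 t1 T (CB * (R + 1))"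
    and pf_a: "\<And>t. t \<in> {0..T} \<Longrightarrow> a t = pf_meas (\<phi>1 t) a0"
    using solution_Cb2_flow[OF sa sol_a t1 R bound_a] by blast
  obtain \<phi>2 where flow_b: "Cb2_flow (\<lambda>s. B (b s)) \<phi>2 t1 T (CB * (R + 1))"
    and pf_b: "\<And>t. t \<in> {0..T} \<Longrightarrow> b t = pf_meas (\<phi>2 t) b0"
    using solution_Cb2_flow[OF sa sol_b t1 R bound_b] by blast
  have sub: "{0..t1} \<subseteq> {0..T}" using t1 by auto
  have dist_cont: "continuous_on {0..t1} (\<lambda>s. wnorm (a s - b s))"
    using sol_a sol_b sub unfolding is_solution_def by (blast intro: continuous_on_wnorm_diff)
  interpret P: Cb2_flow_pair "\<lambda>s. B (a s)" \<phi>1 "\<lambda>s. B (b s)" \<phi>2 t1 T "CB * (R + 1)"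
    "\<lambda>s. wnorm (a s - b s)" CB
    using flow_a flow_b dist_cont standing_assms_pos[OF sa] wnorm_nonneg
      standing_assms_norm_diff_le[OF sa] standing_assms_norm_Dsp_diff_le[OF sa]
    by (intro Cb2_flow_pair.intro Cb2_flow_pair_axioms.intro) auto
  have "wnorm (a s - b s) \<le> P.f1.pf_expansion * wnorm (a0 - b0)
      + P.pf_sensitivity b0 * integral {0..s} (\<lambda>s. wnorm (a s - b s))"
    if s: "s \<in> {0..t1}" for s
    using P.wnorm_pf_meas_diff_le[OF s, of a0 b0] pf_a pf_b s sub
    unfolding P.w_integral_def by auto
  from gronwall_integral[OF dist_cont P.pf_sensitivity_nonneg this t]
  have "wnorm (a t - b t) \<le> P.f1.pf_expansion * wnorm (a0 - b0) * exp (P.pf_sensitivity b0 * t)" .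
  also have "\<dots> \<le> P.f1.pf_expansion * wnorm (a0 - b0) * exp (P.pf_sensitivity b0 * T)"
    using t t1 P.pf_sensitivity_nonneg[of b0] P.f1.pf_expansion_nonneg wnorm_nonneg[of "a0 - b0"]
    by (intro mult_left_mono) (auto intro: mult_left_mono)
  also have "\<dots> = stability_const (real CARD('d)) CB T R (norm b0) * wnorm (a0 - b0)"
    unfolding P.f1.pf_expansion_def P.pf_sensitivity_def P.pair_const_def P.f1.growth_def
      P.f1.curvature_def stability_const_def Let_def
    by (simp add: algebra_simps)
  finally show ?thesis .
qed

lemma continuous_on_stays_below:
  fixes w :: "real \<Rightarrow> real"
  assumes cont: "continuous_on {0..T} w" and start: "w 0 < c"
    and step: "\<And>t. t \<in> {0..T} \<Longrightarrow> (\<And>s. s \<in> {0..t} \<Longrightarrow> w s \<le> c) \<Longrightarrow> w t < c"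
  shows "\<forall>t\<in>{0..T}. w t < c"
proof (rule ccontr)
  assume "\<not> (\<forall>t\<in>{0..T}. w t < c)"
  define S where "S = {0..T} \<inter> w -` {c..}"
  have "S \<noteq> {}" using \<open>\<not> _\<close> unfolding S_def by (auto simp: not_less)
  moreover have "bdd_below S" unfolding S_def by (rule bdd_belowI[of _ 0]) auto
  moreover have "closed S"
    unfolding S_def by (rule continuous_closed_preimage[OF cont]) auto
  ultimately have "Inf S \<in> S" by (rule closed_contains_Inf)
  \<comment> \<open>the first time \<open>ts\<close> at which \<open>w\<close> reaches \<open>c\<close>\<close>
  define ts where "ts = Inf S"
  have ts: "ts \<in> {0..T}" "c \<le> w ts" using \<open>Inf S \<in> S\<close> unfolding ts_def S_def by auto
  have below: "w s < c" if "s \<in> {0..<ts}" for s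
  proof (rule ccontr)
    assume "\<not> w s < c"
    then have "s \<in> S" using that ts unfolding S_def by auto
    then have "ts \<le> s" unfolding ts_def by (rule cInf_lower[OF _ \<open>bdd_below S\<close>])
    then show False using that by simp
  qed
  have "0 < ts" using ts start by (cases "ts = 0") auto
  then have "w ts \<le> c"
    using continuous_le_on_closure[of "{0..<ts}" w ts c] below continuous_on_subset[OF cont] ts
    by (auto intro: less_imp_le)
  then have "w ts < c"
    using below by (intro step[OF ts(1)]) (metis atLeastAtMost_iff atLeastLessThan_iff order_le_less)
  with ts show False by simp
qed

text \<open>Once the distance of the initial data is small, the a priori bound \<open>R0 + 1\<close> holds for \<open>a\<close> as long
  as \<open>a\<close> stays within distance 1 of \<open>b\<close>, and the estimate then keeps it within distance \<open>< 1\<close>.\<close>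

lemma solutions_dist_le_small:
  fixes B :: "'d::finite meas \<Rightarrow> ('d R \<Rightarrow> 'd R)"
  assumes sa: "standing_assms B CB" and T: "T \<ge> 0"
    and sol_a: "is_solution B T a0 a" and sol_b: "is_solution B T b0 b"
    and R0: "R0 \<ge> 0" and bound_b: "\<And>t. t \<in> {0..T} \<Longrightarrow> wnorm (b t) \<le> R0"
    and small: "stability_const (real CARD('d)) CB T (R0 + 1) (norm b0) * wnorm (a0 - b0) < 1"
    and t: "t \<in> {0..T}"
  shows "wnorm (a t - b t) \<le> stability_const (real CARD('d)) CB T (R0 + 1) (norm b0) * wnorm (a0 - b0)"
proof -
  let ?C = "stability_const (real CARD('d)) CB T (R0 + 1) (norm b0)"
  define w where "w t = wnorm (a t - b t)" for t
  have estimate: "w t \<le> ?C * wnorm (a0 - b0)"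
    if t1: "t1 \<in> {0..T}" and close: "\<And>s. s \<in> {0..t1} \<Longrightarrow> w s \<le> 1" and t: "t \<in> {0..t1}" for t1 t
    unfolding w_def
  proof (rule solutions_dist_le[OF sa sol_a sol_b t1 _ _ _ t])
    fix s assume s: "s \<in> {0..t1}"
    show "wnorm (b s) \<le> R0 + 1" using bound_b[of s] s t1 by simp
    show "wnorm (a s) \<le> R0 + 1"
      using wnorm_triangle[of "a s - b s" "b s"] bound_b[of s] close[OF s] s t1 unfolding w_def by simp
  qed (use R0 in simp)
  have "1 \<le> ?C"
    using standing_assms_pos[OF sa] R0 T by (intro stability_const_ge_1) auto
  then have "w 0 \<le> ?C * wnorm (a0 - b0)"
    using sol_a sol_b wnorm_nonneg[of "a0 - b0"] unfolding w_def is_solution_def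
    by (simp add: mult_le_cancel_right1)
  then have "\<forall>t\<in>{0..T}. w t < 1"
  proof (intro continuous_on_stays_below)
    show "continuous_on {0..T} w"
      using sol_a sol_b unfolding w_def is_solution_def by (blast intro: continuous_on_wnorm_diff)
    show "w t < 1" if "t \<in> {0..T}" "\<And>s. s \<in> {0..t} \<Longrightarrow> w s \<le> 1" for t
    proof -
      have "w t \<le> ?C * wnorm (a0 - b0)" by (rule estimate[of t]) (use that in auto)
      then show ?thesis using small by simp
    qed
  qed (use small in simp)
  then show ?thesis
    unfolding w_def by (intro estimate[of T, unfolded w_def]) (use t T in \<open>auto intro: less_imp_le\<close>)
qed

lemma uniform_constant_of_eventual_bound:
  fixes f :: "nat \<Rightarrow> 'a \<Rightarrow> real" and g :: "nat \<Rightarrow> real"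
  assumes each: "\<And>n. \<exists>c. \<forall>x\<in>A. f n x \<le> c * g n"
    and eventual: "eventually (\<lambda>n. \<forall>x\<in>A. f n x \<le> c * g n) sequentially"
    and g: "\<And>n. 0 \<le> g n"
  shows "\<exists>C>0. \<forall>n. \<forall>x\<in>A. f n x \<le> C * g n"
proof -
  obtain N where N: "\<And>n. N \<le> n \<Longrightarrow> \<forall>x\<in>A. f n x \<le> c * g n"
    using eventual unfolding eventually_sequentially by blast
  obtain cn where cn: "\<And>n. \<forall>x\<in>A. f n x \<le> cn n * g n" using each by metis
  define C where "C = \<bar>c\<bar> + (\<Sum>m<N. \<bar>cn m\<bar>) + 1"
  have bound: "\<forall>x\<in>A. f n x \<le> C * g n" if "d \<le> C" "\<forall>x\<in>A. f n x \<le> d * g n" for n d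
    using that g[of n] by (meson abs_ge_self mult_right_mono order_trans)
  have "\<forall>x\<in>A. f n x \<le> C * g n" for n
  proof (cases "N \<le> n")
    case True
    have "0 \<le> (\<Sum>m<N. \<bar>cn m\<bar>)" by (simp add: sum_nonneg)
    then have "c \<le> C" unfolding C_def by linarith
    then show ?thesis by (rule bound[OF _ N[OF True]])
  next
    case False
    then have "\<bar>cn n\<bar> \<le> (\<Sum>m<N. \<bar>cn m\<bar>)" by (intro member_le_sum) auto
    then show ?thesis by (intro bound[OF _ cn]) (auto simp: C_def)
  qed
  moreover have "C > 0" unfolding C_def by (simp add: sum_nonneg add_nonneg_pos)
  ultimately show ?thesis by blast
qed

lemma solutions_dist_le_uniform:
  fixes B :: "'d::finite meas \<Rightarrow> ('d R \<Rightarrow> 'd R)"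
  assumes sa: "standing_assms B CB" and T: "T \<ge> 0"
    and sol: "is_solution B T \<xi>0 \<xi>" and sol_n: "\<And>n. is_solution B T (\<xi>0n n) (\<xi>n n)"
    and lim: "(\<lambda>n. wnorm (\<xi>0n n - \<xi>0)) \<longlonglongrightarrow> 0"
  shows "\<exists>C>0. \<forall>n. \<forall>t\<in>{0..T}. wnorm (\<xi>n n t - \<xi> t) \<le> C * wnorm (\<xi>0n n - \<xi>0)"
proof -
  have "wcont_on T \<xi>" using sol unfolding is_solution_def by simp
  then obtain R0 where R0: "R0 \<ge> 0" "\<And>t. t \<in> {0..T} \<Longrightarrow> wnorm (\<xi> t) \<le> R0"
    using wcont_on_bounded by blast
  let ?C = "stability_const (real CARD('d)) CB T (R0 + 1) (norm \<xi>0)"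
  show ?thesis
  proof (rule uniform_constant_of_eventual_bound[where c="?C"])
    fix n
    have "wcont_on T (\<xi>n n)" using sol_n[of n] unfolding is_solution_def by simp
    then obtain Rn where Rn: "Rn \<ge> 0" "\<And>t. t \<in> {0..T} \<Longrightarrow> wnorm (\<xi>n n t) \<le> Rn"
      using wcont_on_bounded by blast
    have "\<forall>t\<in>{0..T}. wnorm (\<xi>n n t - \<xi> t)
        \<le> stability_const (real CARD('d)) CB T (max R0 Rn) (norm \<xi>0) * wnorm (\<xi>0n n - \<xi>0)"
      using T R0 Rn by (intro ballI solutions_dist_le[OF sa sol_n sol, of T]) (auto simp: le_max_iff_disj)
    then show "\<exists>c. \<forall>t\<in>{0..T}. wnorm (\<xi>n n t - \<xi> t) \<le> c * wnorm (\<xi>0n n - \<xi>0)" by blast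
  next
    have "(\<lambda>n. ?C * wnorm (\<xi>0n n - \<xi>0)) \<longlonglongrightarrow> 0"
      using lim by (simp add: tendsto_mult_right_zero)
    then have "\<forall>\<^sub>F n in sequentially. ?C * wnorm (\<xi>0n n - \<xi>0) < 1" by (rule order_tendstoD(2)) simp
    then show "\<forall>\<^sub>F n in sequentially. \<forall>t\<in>{0..T}. wnorm (\<xi>n n t - \<xi> t) \<le> ?C * wnorm (\<xi>0n n - \<xi>0)"
      by eventually_elim (use solutions_dist_le_small[OF sa T sol_n sol R0] in blast)
  qed (rule wnorm_nonneg)
qed

lemma SUP_atLeastAtMost_bounds:
  fixes h :: "real \<Rightarrow> real"
  assumes "0 \<le> T" "\<And>t. t \<in> {0..T} \<Longrightarrow> 0 \<le> h t" "\<And>t. t \<in> {0..T} \<Longrightarrow> h t \<le> b"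
  shows "0 \<le> (SUP t\<in>{0..T}. h t)" and "(SUP t\<in>{0..T}. h t) \<le> b"
proof -
  show "(SUP t\<in>{0..T}. h t) \<le> b" using assms by (intro cSUP_least) auto
  have "h 0 \<le> (SUP t\<in>{0..T}. h t)" using assms by (intro cSUP_upper bdd_aboveI2[where M=b]) auto
  moreover have "0 \<le> h 0" using assms by simp
  ultimately show "0 \<le> (SUP t\<in>{0..T}. h t)" by linarith
qed

theorem theorem5p1:
  fixes B :: "'d::finite meas \<Rightarrow> ('d R \<Rightarrow> 'd R)" and CB T :: real
    and \<xi>0 :: "'d meas" and \<xi>0n :: "nat \<Rightarrow> 'd meas"
    and \<xi> :: "real \<Rightarrow> 'd meas" and \<xi>n :: "nat \<Rightarrow> real \<Rightarrow> 'd meas"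
  assumes "standing_assms B CB"
    and "T \<ge> 0"
    and "(\<lambda>n. wnorm (\<xi>0n n - \<xi>0)) \<longlonglongrightarrow> 0"
    and "unique_solution B T \<xi>0 \<xi>"
    and "\<And>n. unique_solution B T (\<xi>0n n) (\<xi>n n)"
  shows "(\<lambda>n. SUP t\<in>{0..T}. wnorm (\<xi>n n t - \<xi> t)) \<longlonglongrightarrow> 0
     \<and> (\<exists>C>0. \<forall>n. (SUP t\<in>{0..T}. wnorm (\<xi>n n t - \<xi> t)) \<le> C * wnorm (\<xi>0n n - \<xi>0))"
proof -
  have "is_solution B T \<xi>0 \<xi>" and "\<And>n. is_solution B T (\<xi>0n n) (\<xi>n n)"
    using assms(4,5) unfolding unique_solution_def by auto
  then obtain C where C: "C > 0"
    and bound: "\<And>n t. t \<in> {0..T} \<Longrightarrow> wnorm (\<xi>n n t - \<xi> t) \<le> C * wnorm (\<xi>0n n - \<xi>0)"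
    using solutions_dist_le_uniform[OF assms(1,2) _ _ assms(3)] by blast
  let ?D = "\<lambda>n. SUP t\<in>{0..T}. wnorm (\<xi>n n t - \<xi> t)"
  have D: "0 \<le> ?D n" "?D n \<le> C * wnorm (\<xi>0n n - \<xi>0)" for n
    using SUP_atLeastAtMost_bounds[OF assms(2) wnorm_nonneg bound] by auto
  have "(\<lambda>n. C * wnorm (\<xi>0n n - \<xi>0)) \<longlonglongrightarrow> 0"
    using assms(3) by (simp add: tendsto_mult_right_zero)
  then have "?D \<longlonglongrightarrow> 0" by (rule Lim_null_comparison[rotated]) (use D in simp)
  with C D(2) show ?thesis by blast
qed

end
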